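(* Let $\lambda\in ba(\mathcal A)$ and $\mathscr M\subset ba(\mathcal A)$. There is a unique way of writing $\lambda=\lambda^c_{\mathscr M}+\lambda^\perp_{\mathscr M}$ with $\lambda^c_{\mathscr M},\lambda^\perp_{\mathscr M}\in ba(\mathcal A)$ such that (i) $\lambda^c_{\mathscr M}\ll m$ for some $m\in\mathbf A(\mathscr M)$, and (ii) $\lambda^\perp_{\mathscr M}\perp\mu$ for every $\mu\in\mathscr M$. If $\lambda$ is positive (resp. countably additive), then so are $\lambda^c_{\mathscr M}$ and $\lambda^\perp_{\mathscr M}$.
   Context: $\Omega$ is a set, $\mathcal A$ an algebra of subsets of $\Omega$, $ba(\mathcal A)$ the Banach lattice of bounded finitely additive real set functions on $\mathcal A$ with norm $\|\mu\|=|\mu|(\Omega)$, where $|\mu|$ is the total variation of $\mu$. For $\lambda,\mu\in ba(\mathcal A)$: $\mu\ll\lambda$ (also written $\lambda\gg\mu$) means that for every $\varepsilon>0$ there is $\delta>0$ with $|\lambda|(A)<\delta\Rightarrow|\mu|(A)<\varepsilon$ ($A\in\mathcal A$); $\mu\perp\lambda$ means that for every $\varepsilon>0$ there is $A\in\mathcal A$ with $|\mu|(A)+|\lambda|(A^c)<\varepsilon$. For $\mathscr M\subset ba(\mathcal A)$, $\mathbf A(\mathscr M)=\{\sum_n\alpha_n\frac{|\mu_n|}{1\vee\|\mu_n\|}:\mu_n\in\mathscr M,\ \alpha_n\ge0,\ \sum_n\alpha_n=1\}$ (countable convex combinations). *)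

theory Defs
  imports "HOL-Analysis.Analysis"
begin

text \<open>Set functions on an algebra A of subsets of Omega are modelled as
  functions of type 'a set => real; only their values on A matter.\<close>

definition fin_additive :: "'a set set \<Rightarrow> ('a set \<Rightarrow> real) \<Rightarrow> bool" where
  "fin_additive A mu \<longleftrightarrow>
     (\<forall>a\<in>A. \<forall>b\<in>A. a \<inter> b = {} \<longrightarrow> mu (a \<union> b) = mu a + mu b)"

definition bdd_setfun :: "'a set set \<Rightarrow> ('a set \<Rightarrow> real) \<Rightarrow> bool" where
  "bdd_setfun A mu \<longleftrightarrow> (\<exists>K. \<forall>a\<in>A. \<bar>mu a\<bar> \<le> K)"

definition ba :: "'a set set \<Rightarrow> ('a set \<Rightarrow> real) \<Rightarrow> bool" where
  "ba A mu \<longleftrightarrow> fin_additive A mu \<and> bdd_setfun A mu"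

definition tv :: "'a set set \<Rightarrow> ('a set \<Rightarrow> real) \<Rightarrow> 'a set \<Rightarrow> real" where
  "tv A mu E = Sup {(\<Sum>B\<in>P. \<bar>mu B\<bar>) | P. finite P \<and> P \<subseteq> A \<and> disjoint P \<and> (\<forall>B\<in>P. B \<subseteq> E)}"

definition ba_norm :: "'a set \<Rightarrow> 'a set set \<Rightarrow> ('a set \<Rightarrow> real) \<Rightarrow> real" where
  "ba_norm \<Omega> A mu = tv A mu \<Omega>"

text \<open>abs_cont A lam mu  means  mu << lam.\<close>
definition abs_cont :: "'a set set \<Rightarrow> ('a set \<Rightarrow> real) \<Rightarrow> ('a set \<Rightarrow> real) \<Rightarrow> bool" where
  "abs_cont A lam mu \<longleftrightarrow>
     (\<forall>\<epsilon>>0. \<exists>\<delta>>0. \<forall>E\<in>A. tv A lam E < \<delta> \<longrightarrow> tv A mu E < \<epsilon>)"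

definition singular :: "'a set \<Rightarrow> 'a set set \<Rightarrow> ('a set \<Rightarrow> real) \<Rightarrow> ('a set \<Rightarrow> real) \<Rightarrow> bool" where
  "singular \<Omega> A mu lam \<longleftrightarrow>
     (\<forall>\<epsilon>>0. \<exists>E\<in>A. tv A mu E + tv A lam (\<Omega> - E) < \<epsilon>)"

definition convA :: "'a set \<Rightarrow> 'a set set \<Rightarrow> ('a set \<Rightarrow> real) set \<Rightarrow> ('a set \<Rightarrow> real) set" where
  "convA \<Omega> A M =
     {(\<lambda>E. \<Sum>n. \<alpha> n * (tv A (mus n) E / max 1 (ba_norm \<Omega> A (mus n)))) | \<alpha> mus.
        (\<forall>n. mus n \<in> M) \<and> (\<forall>n. \<alpha> n \<ge> 0) \<and> \<alpha> sums 1}"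

definition positive_setfun :: "'a set set \<Rightarrow> ('a set \<Rightarrow> real) \<Rightarrow> bool" where
  "positive_setfun A mu \<longleftrightarrow> (\<forall>E\<in>A. mu E \<ge> 0)"

definition countably_additive_setfun :: "'a set set \<Rightarrow> ('a set \<Rightarrow> real) \<Rightarrow> bool" where
  "countably_additive_setfun A mu \<longleftrightarrow>
     (\<forall>F :: nat \<Rightarrow> 'a set. range F \<subseteq> A \<longrightarrow> disjoint_family F \<longrightarrow> (\<Union>n. F n) \<in> A \<longrightarrow>
        (\<lambda>n. mu (F n)) sums mu (\<Union>n. F n))"

definition is_decomp ::
  "'a set \<Rightarrow> 'a set set \<Rightarrow> ('a set \<Rightarrow> real) set \<Rightarrow> ('a set \<Rightarrow> real) \<Rightarrow>
   ('a set \<Rightarrow> real) \<Rightarrow> ('a set \<Rightarrow> real) \<Rightarrow> bool" where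
  "is_decomp \<Omega> A M lam lc lp \<longleftrightarrow>
     ba A lc \<and> ba A lp \<and> (\<forall>E\<in>A. lam E = lc E + lp E) \<and>
     (\<exists>m\<in>convA \<Omega> A M. abs_cont A m lc) \<and>
     (\<forall>mu\<in>M. singular \<Omega> A lp mu)"

end

theory Submission
  imports Defs
begin

text \<open>
  The development proceeds as follows.
  \<^item> Finite additivity and the total variation \<open>|mu|\<close>: it is a finitely additive, positive
    member of \<open>ba(A)\<close> dominating \<open>mu\<close>; singularity and absolute continuity are stable
    under sums and differences, and a set function that is both absolutely continuous and
    singular with respect to the same \<open>n\<close> vanishes (this gives uniqueness).
  \<^item> The Jordan decomposition \<open>lam = P - N\<close> into positive parts, inheriting countable
    additivity.
  \<^item> Countable convex combinations (locale \<open>convex_combination\<close>): they are positive,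
    inherit singularity from their members, and a countable subfamily of \<open>M\<close> is dominated by
    a single one of them.
  \<^item> For positive \<open>p\<close> (locale \<open>positive_decomposition\<close>) the singular part is the infimum, over
    finite \<open>S \<subseteq> M\<close> and \<open>\<delta> > 0\<close>, of the largest \<open>p\<close>-mass of a set that is \<open>\<delta>\<close>-small for \<open>S\<close>;
    the remainder is controlled by countably many members of \<open>M\<close>, hence absolutely
    continuous with respect to a member of \<open>convA\<close>.
  Existence follows by applying this to \<open>P\<close> and \<open>N\<close>; uniqueness by the vanishing criterion.
\<close>

lemma cSup_add_le:
  fixes S T :: "real set"
  assumes S: "S \<noteq> {}" and T: "T \<noteq> {}" and le: "\<And>a b. a \<in> S \<Longrightarrow> b \<in> T \<Longrightarrow> a + b \<le> c"
  shows "Sup S + Sup T \<le> c"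
proof -
  have "Sup S \<le> c - b" if "b \<in> T" for b
    using S le[OF _ that] by (intro cSup_least) (auto simp: le_diff_eq)
  then have "Sup T \<le> c - Sup S"
    using T by (intro cSup_least) (auto simp: le_diff_eq add.commute)
  then show ?thesis by simp
qed

lemma cInf_add_ge:
  fixes S T :: "real set"
  assumes S: "S \<noteq> {}" and T: "T \<noteq> {}" and ge: "\<And>a b. a \<in> S \<Longrightarrow> b \<in> T \<Longrightarrow> c \<le> a + b"
  shows "c \<le> Inf S + Inf T"
proof -
  have "c - b \<le> Inf S" if "b \<in> T" for b
    using S ge[OF _ that] by (intro cInf_greatest) (auto simp: diff_le_eq)
  then have "c - Inf S \<le> Inf T"
    using T by (intro cInf_greatest) (auto simp: diff_le_eq add.commute)
  then show ?thesis by simp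
qed

locale set_algebra = algebra \<Omega> A for \<Omega> :: "'a set" and A :: "'a set set"
begin

lemma fin_additiveD:
  "fin_additive A mu \<Longrightarrow> a \<in> A \<Longrightarrow> b \<in> A \<Longrightarrow> a \<inter> b = {} \<Longrightarrow> mu (a \<union> b) = mu a + mu b"
  unfolding fin_additive_def by blast

lemma ba_fin_additive: "ba A mu \<Longrightarrow> fin_additive A mu"
  unfolding ba_def by blast

lemma fa_empty: "fin_additive A mu \<Longrightarrow> mu {} = 0"
  using fin_additiveD[of mu "{}" "{}"] by simp

lemma fa_split: "fin_additive A mu \<Longrightarrow> a \<in> A \<Longrightarrow> b \<in> A \<Longrightarrow> mu a = mu (a \<inter> b) + mu (a - b)"
  using fin_additiveD[of mu "a \<inter> b" "a - b"] by (simp add: Int Diff Int_Diff_Un Int_Diff_disjoint)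

lemma fa_diff: "fin_additive A mu \<Longrightarrow> a \<in> A \<Longrightarrow> b \<in> A \<Longrightarrow> b \<subseteq> a \<Longrightarrow> mu (a - b) = mu a - mu b"
  using fa_split[of mu a b] by (simp add: Int_absorb1)

lemma positive_mono:
  assumes "fin_additive A mu" "positive_setfun A mu" "a \<in> A" "b \<in> A" "a \<subseteq> b"
  shows "mu a \<le> mu b"
  using assms fa_diff[of mu b a] Diff[of b a] unfolding positive_setfun_def by force

lemma fa_Union:
  assumes fa: "fin_additive A mu"
  shows "finite P \<Longrightarrow> P \<subseteq> A \<Longrightarrow> disjoint P \<Longrightarrow> mu (\<Union>P) = (\<Sum>B\<in>P. mu B)"
proof (induction P rule: finite_induct)
  case empty
  then show ?case using fa_empty[OF fa] by simp
next
  case (insert x P)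
  have "x \<inter> B = {}" if "B \<in> P" for B
    using insert.prems(2) insert.hyps(2) that unfolding pairwise_def disjnt_def by (metis insertCI)
  then have "x \<inter> \<Union>P = {}" by blast
  moreover have "\<Union>P \<in> A" using insert.prems(1) insert.hyps(1) by (intro finite_Union) auto
  ultimately have "mu (x \<union> \<Union>P) = mu x + mu (\<Union>P)"
    using insert.prems(1) by (intro fin_additiveD[OF fa]) auto
  moreover have "disjoint P" using insert.prems(2) by (simp add: pairwise_insert)
  ultimately show ?case using insert by simp
qed

lemma fa_UN_lessThan:
  fixes F :: "nat \<Rightarrow> 'a set"
  assumes fa: "fin_additive A mu" and F: "range F \<subseteq> A" "disjoint_family F"
  shows "mu (\<Union>i<N. F i) = (\<Sum>i<N. mu (F i))"
proof (induction N)
  case 0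
  then show ?case using fa_empty[OF fa] by simp
next
  case (Suc N)
  have "F i \<inter> F N = {}" if "i < N" for i
    using F(2) that unfolding disjoint_family_on_def by simp
  then have "(\<Union>i<N. F i) \<inter> F N = {}" by blast
  moreover have "(\<Union>i<N. F i) \<in> A" using F(1) by (intro finite_UN) auto
  ultimately have "mu ((\<Union>i<N. F i) \<union> F N) = mu (\<Union>i<N. F i) + mu (F N)"
    using F(1) by (intro fin_additiveD[OF fa]) auto
  moreover have "(\<Union>i<Suc N. F i) = (\<Union>i<N. F i) \<union> F N" by (auto simp: lessThan_Suc)
  ultimately show ?case using Suc by simp
qed

lemma ba_add: "ba A mu \<Longrightarrow> ba A nu \<Longrightarrow> ba A (\<lambda>E. mu E + nu E)"
proof -
  assume "ba A mu" "ba A nu"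
  then obtain K1 K2 where "\<forall>a\<in>A. \<bar>mu a\<bar> \<le> K1" "\<forall>a\<in>A. \<bar>nu a\<bar> \<le> K2"
    and "fin_additive A mu" "fin_additive A nu" unfolding ba_def bdd_setfun_def by blast
  then have "\<forall>a\<in>A. \<bar>mu a + nu a\<bar> \<le> K1 + K2" and "fin_additive A (\<lambda>E. mu E + nu E)"
    unfolding fin_additive_def by (auto intro: order.trans[OF abs_triangle_ineq] add_mono)
  then show ?thesis unfolding ba_def bdd_setfun_def by blast
qed

lemma ba_diff: "ba A mu \<Longrightarrow> ba A nu \<Longrightarrow> ba A (\<lambda>E. mu E - nu E)"
proof -
  assume "ba A mu" "ba A nu"
  then obtain K1 K2 where "\<forall>a\<in>A. \<bar>mu a\<bar> \<le> K1" "\<forall>a\<in>A. \<bar>nu a\<bar> \<le> K2"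
    and "fin_additive A mu" "fin_additive A nu" unfolding ba_def bdd_setfun_def by blast
  then have "\<forall>a\<in>A. \<bar>mu a - nu a\<bar> \<le> K1 + K2" and "fin_additive A (\<lambda>E. mu E - nu E)"
    unfolding fin_additive_def by (auto intro: order.trans[OF abs_triangle_ineq4] add_mono)
  then show ?thesis unfolding ba_def bdd_setfun_def by blast
qed

text \<open>A bounded additive set function has bounded variation: the positive and the
  negative members of a disjoint family are each bounded by the bound of \<open>mu\<close>.\<close>
lemma ba_variation_bounded:
  assumes "ba A mu"
  obtains K where "\<And>P. finite P \<Longrightarrow> P \<subseteq> A \<Longrightarrow> disjoint P \<Longrightarrow> (\<Sum>B\<in>P. \<bar>mu B\<bar>) \<le> K"
proof -
  obtain K where K: "\<And>a. a \<in> A \<Longrightarrow> \<bar>mu a\<bar> \<le> K"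
    using assms unfolding ba_def bdd_setfun_def by blast
  have fa: "fin_additive A mu" using assms by (rule ba_fin_additive)
  have "(\<Sum>B\<in>P. \<bar>mu B\<bar>) \<le> 2 * K" if P: "finite P" "P \<subseteq> A" "disjoint P" for P
  proof -
    define Q where "Q = {B\<in>P. 0 \<le> mu B}"
    have Q: "finite Q" "Q \<subseteq> A" "disjoint Q" "finite (P - Q)" "P - Q \<subseteq> A" "disjoint (P - Q)"
      using P unfolding Q_def by (auto simp: pairwise_def)
    have "(\<Sum>B\<in>P. \<bar>mu B\<bar>) = (\<Sum>B\<in>Q. \<bar>mu B\<bar>) + (\<Sum>B\<in>P - Q. \<bar>mu B\<bar>)"
      using P(1) sum.subset_diff[of Q P "\<lambda>B. \<bar>mu B\<bar>"] unfolding Q_def by (simp add: add.commute)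
    also have "(\<Sum>B\<in>Q. \<bar>mu B\<bar>) = (\<Sum>B\<in>Q. mu B)"
      unfolding Q_def by (rule sum.cong) auto
    also have "(\<Sum>B\<in>P - Q. \<bar>mu B\<bar>) = - (\<Sum>B\<in>P - Q. mu B)"
      unfolding Q_def sum_negf[symmetric] by (rule sum.cong) auto
    also have "(\<Sum>B\<in>Q. mu B) + - (\<Sum>B\<in>P - Q. mu B) = mu (\<Union>Q) - mu (\<Union>(P - Q))"
      using fa_Union[OF fa] Q by simp
    also have "\<dots> \<le> 2 * K"
      using K[of "\<Union>Q"] K[of "\<Union>(P - Q)"] Q by (simp add: finite_Union)
    finally show ?thesis .
  qed
  then show ?thesis using that by blast
qed

definition subpartitions :: "'a set \<Rightarrow> 'a set set set" where
  "subpartitions E = {P. finite P \<and> P \<subseteq> A \<and> disjoint P \<and> (\<forall>B\<in>P. B \<subseteq> E)}"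

lemma tv_SUP: "tv A mu E = (SUP P\<in>subpartitions E. \<Sum>B\<in>P. \<bar>mu B\<bar>)"
  unfolding tv_def subpartitions_def by (simp add: setcompr_eq_image)

lemma subpartitions_ne: "subpartitions E \<noteq> {}"
proof -
  have "{} \<in> subpartitions E" unfolding subpartitions_def by simp
  then show ?thesis by blast
qed

lemma variation_sums_bdd:
  assumes "ba A mu"
  shows "bdd_above ((\<lambda>P. \<Sum>B\<in>P. \<bar>mu B\<bar>) ` subpartitions E)"
proof -
  obtain K where "\<And>P. finite P \<Longrightarrow> P \<subseteq> A \<Longrightarrow> disjoint P \<Longrightarrow> (\<Sum>B\<in>P. \<bar>mu B\<bar>) \<le> K"
    using ba_variation_bounded[OF assms] by blast
  then show ?thesis by (intro bdd_aboveI[of _ K]) (auto simp: subpartitions_def)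
qed

lemma tv_ge:
  assumes "ba A mu" "finite P" "P \<subseteq> A" "disjoint P" "\<forall>B\<in>P. B \<subseteq> E"
  shows "(\<Sum>B\<in>P. \<bar>mu B\<bar>) \<le> tv A mu E"
  unfolding tv_SUP using assms
  by (intro cSUP_upper variation_sums_bdd) (auto simp: subpartitions_def)

lemma tv_le:
  assumes "\<And>P. finite P \<Longrightarrow> P \<subseteq> A \<Longrightarrow> disjoint P \<Longrightarrow> \<forall>B\<in>P. B \<subseteq> E \<Longrightarrow> (\<Sum>B\<in>P. \<bar>mu B\<bar>) \<le> c"
  shows "tv A mu E \<le> c"
  unfolding tv_SUP
  by (rule cSUP_least[OF subpartitions_ne]) (use assms in \<open>auto simp: subpartitions_def\<close>)

lemma tv_nonneg: "ba A mu \<Longrightarrow> 0 \<le> tv A mu E"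
  using tv_ge[of mu "{}" E] by simp

lemma abs_le_tv: "ba A mu \<Longrightarrow> E \<in> A \<Longrightarrow> \<bar>mu E\<bar> \<le> tv A mu E"
  using tv_ge[of mu "{E}" E] by simp

lemma tv_mono: "ba A mu \<Longrightarrow> E \<subseteq> E' \<Longrightarrow> tv A mu E \<le> tv A mu E'"
  unfolding tv_SUP
  by (rule cSUP_subset_mono[OF subpartitions_ne variation_sums_bdd]) (auto simp: subpartitions_def)

lemma tv_le_norm: "ba A mu \<Longrightarrow> E \<in> A \<Longrightarrow> tv A mu E \<le> ba_norm \<Omega> A mu"
  unfolding ba_norm_def using tv_mono sets_into_space by blast

lemma tv_empty:
  assumes ba: "ba A mu" shows "tv A mu {} = 0"
proof -
  have "tv A mu {} \<le> 0"
  proof (rule tv_le)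
    fix P :: "'a set set" assume "\<forall>B\<in>P. B \<subseteq> {}"
    then have "\<forall>B\<in>P. \<bar>mu B\<bar> = 0" using fa_empty[OF ba_fin_additive[OF ba]] by auto
    then show "(\<Sum>B\<in>P. \<bar>mu B\<bar>) \<le> 0" by simp
  qed
  then show ?thesis using tv_nonneg[OF ba] by (simp add: order_antisym)
qed

lemma tv_cong:
  assumes "\<And>E. E \<in> A \<Longrightarrow> mu E = nu E"
  shows "tv A mu E = tv A nu E"
  unfolding tv_SUP using assms
  by (intro SUP_cong refl sum.cong) (auto simp: subpartitions_def)

lemma tv_add_le: "ba A mu \<Longrightarrow> ba A nu \<Longrightarrow> tv A (\<lambda>E. mu E + nu E) E \<le> tv A mu E + tv A nu E"
proof (rule tv_le)
  fix P assume ba: "ba A mu" "ba A nu" and P: "finite P" "P \<subseteq> A" "disjoint P" "\<forall>B\<in>P. B \<subseteq> E"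
  have "(\<Sum>B\<in>P. \<bar>mu B + nu B\<bar>) \<le> (\<Sum>B\<in>P. \<bar>mu B\<bar>) + (\<Sum>B\<in>P. \<bar>nu B\<bar>)"
    by (simp add: sum.distrib[symmetric] sum_mono abs_triangle_ineq)
  also have "\<dots> \<le> tv A mu E + tv A nu E" using tv_ge[OF ba(1) P] tv_ge[OF ba(2) P] by simp
  finally show "(\<Sum>B\<in>P. \<bar>mu B + nu B\<bar>) \<le> tv A mu E + tv A nu E" .
qed

lemma tv_diff_le: "ba A mu \<Longrightarrow> ba A nu \<Longrightarrow> tv A (\<lambda>E. mu E - nu E) E \<le> tv A mu E + tv A nu E"
proof (rule tv_le)
  fix P assume ba: "ba A mu" "ba A nu" and P: "finite P" "P \<subseteq> A" "disjoint P" "\<forall>B\<in>P. B \<subseteq> E"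
  have "(\<Sum>B\<in>P. \<bar>mu B - nu B\<bar>) \<le> (\<Sum>B\<in>P. \<bar>mu B\<bar>) + (\<Sum>B\<in>P. \<bar>nu B\<bar>)"
    by (simp add: sum.distrib[symmetric] sum_mono abs_triangle_ineq4)
  also have "\<dots> \<le> tv A mu E + tv A nu E" using tv_ge[OF ba(1) P] tv_ge[OF ba(2) P] by simp
  finally show "(\<Sum>B\<in>P. \<bar>mu B - nu B\<bar>) \<le> tv A mu E + tv A nu E" .
qed

lemma tv_positive:
  assumes ba: "ba A mu" and pos: "positive_setfun A mu" and E: "E \<in> A"
  shows "tv A mu E = mu E"
proof (rule order_antisym)
  have fa: "fin_additive A mu" using ba by (rule ba_fin_additive)
  show "tv A mu E \<le> mu E"
  proof (rule tv_le)
    fix P assume P: "finite P" "P \<subseteq> A" "disjoint P" "\<forall>B\<in>P. B \<subseteq> E"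
    have "(\<Sum>B\<in>P. \<bar>mu B\<bar>) = (\<Sum>B\<in>P. mu B)"
      using pos P(2) unfolding positive_setfun_def by (intro sum.cong) auto
    also have "\<dots> = mu (\<Union>P)" using fa_Union[OF fa P(1-3)] by simp
    also have "\<dots> \<le> mu E" using P E by (intro positive_mono[OF fa pos] finite_Union) auto
    finally show "(\<Sum>B\<in>P. \<bar>mu B\<bar>) \<le> mu E" .
  qed
  show "mu E \<le> tv A mu E" using abs_le_tv[OF ba E] by simp
qed

text \<open>\<open>|mu|\<close> is superadditive on disjoint sets: two admissible families inside disjoint
  sets combine to one inside their union.\<close>
lemma tv_superadditive:
  assumes ba: "ba A mu" and disj: "E1 \<inter> E2 = {}"
  shows "tv A mu E1 + tv A mu E2 \<le> tv A mu (E1 \<union> E2)"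
  unfolding tv_SUP[of mu E1] tv_SUP[of mu E2]
proof (rule cSup_add_le)
  fix a b
  assume "a \<in> (\<lambda>P. \<Sum>B\<in>P. \<bar>mu B\<bar>) ` subpartitions E1" "b \<in> (\<lambda>P. \<Sum>B\<in>P. \<bar>mu B\<bar>) ` subpartitions E2"
  then obtain P1 P2 where
    P1: "a = (\<Sum>B\<in>P1. \<bar>mu B\<bar>)" "finite P1" "P1 \<subseteq> A" "disjoint P1" "\<forall>B\<in>P1. B \<subseteq> E1" and
    P2: "b = (\<Sum>B\<in>P2. \<bar>mu B\<bar>)" "finite P2" "P2 \<subseteq> A" "disjoint P2" "\<forall>B\<in>P2. B \<subseteq> E2"
    unfolding subpartitions_def by blast
  have cross: "B \<inter> C = {}" if "B \<in> P1" "C \<in> P2" for B C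
    using that P1(5) P2(5) disj by blast
  have "disjoint (P1 \<union> P2)"
    unfolding pairwise_def disjnt_def
  proof (intro ballI impI)
    fix B C assume "B \<in> P1 \<union> P2" "C \<in> P1 \<union> P2" "B \<noteq> C"
    then show "B \<inter> C = {}"
      using P1(4) P2(4) cross[of B C] cross[of C B] unfolding pairwise_def disjnt_def
      by (metis Int_commute UnE)
  qed
  moreover have "\<forall>B\<in>P1 \<inter> P2. \<bar>mu B\<bar> = 0"
    using cross fa_empty[OF ba_fin_additive[OF ba]] by (metis IntD1 IntD2 Int_absorb abs_zero)
  then have "a + b = (\<Sum>B\<in>P1 \<union> P2. \<bar>mu B\<bar>)"
    using sum.union_inter_neutral[OF P1(2) P2(2), of "\<lambda>B. \<bar>mu B\<bar>"] P1(1) P2(1) by simp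
  ultimately show "a + b \<le> tv A mu (E1 \<union> E2)"
    using P1 P2 tv_ge[OF ba, of "P1 \<union> P2" "E1 \<union> E2"] by (simp add: Ball_def) blast
qed (use subpartitions_ne in auto)

text \<open>Restricting the sets of a disjoint family to \<open>F\<close> yields a disjoint family inside \<open>F\<close>.\<close>
lemma tv_restrict_ge:
  assumes ba: "ba A mu" and P: "finite P" "P \<subseteq> A" "disjoint P" and F: "F \<in> A"
  shows "(\<Sum>B\<in>P. \<bar>mu (B \<inter> F)\<bar>) \<le> tv A mu F"
proof -
  have "\<bar>mu (B \<inter> F)\<bar> = 0" if "B \<in> P" "C \<in> P" "B \<noteq> C" "B \<inter> F = C \<inter> F" for B C
  proof -
    have "B \<inter> C = {}" using P(3) that(1-3) unfolding pairwise_def disjnt_def by blast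
    then have "B \<inter> F = {}" using that(4) by blast
    then show ?thesis using fa_empty[OF ba_fin_additive[OF ba]] by simp
  qed
  then have "(\<Sum>B\<in>P. \<bar>mu (B \<inter> F)\<bar>) = (\<Sum>C\<in>(\<lambda>B. B \<inter> F) ` P. \<bar>mu C\<bar>)"
    using sum.reindex_nontrivial[OF P(1), of "\<lambda>B. B \<inter> F" "\<lambda>C. \<bar>mu C\<bar>"] by (simp add: comp_def)
  also have "\<dots> \<le> tv A mu F"
    using P F by (intro tv_ge[OF ba]) (auto intro: disjoint_image_subset)
  finally show ?thesis .
qed

text \<open>Conversely, splitting each member of an admissible family along \<open>E1\<close> and \<open>E2\<close> shows
  subadditivity on disjoint members of \<open>A\<close>.\<close>
lemma tv_subadditive_disjoint:
  assumes ba: "ba A mu" and E: "E1 \<in> A" "E2 \<in> A" "E1 \<inter> E2 = {}"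
  shows "tv A mu (E1 \<union> E2) \<le> tv A mu E1 + tv A mu E2"
proof (rule tv_le)
  fix P assume P: "finite P" "P \<subseteq> A" "disjoint P" "\<forall>B\<in>P. B \<subseteq> E1 \<union> E2"
  have "\<bar>mu B\<bar> \<le> \<bar>mu (B \<inter> E1)\<bar> + \<bar>mu (B \<inter> E2)\<bar>" if "B \<in> P" for B
  proof -
    have "B - E1 = B \<inter> E2" using that P(4) E(3) by blast
    then have "mu B = mu (B \<inter> E1) + mu (B \<inter> E2)"
      using fa_split[OF ba_fin_additive[OF ba], of B E1] that P(2) E(1) by auto
    then show ?thesis by simp
  qed
  then have "(\<Sum>B\<in>P. \<bar>mu B\<bar>) \<le> (\<Sum>B\<in>P. \<bar>mu (B \<inter> E1)\<bar>) + (\<Sum>B\<in>P. \<bar>mu (B \<inter> E2)\<bar>)"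
    by (simp add: sum.distrib[symmetric] sum_mono)
  also have "\<dots> \<le> tv A mu E1 + tv A mu E2"
    using tv_restrict_ge[OF ba P(1-3)] E by (simp add: add_mono)
  finally show "(\<Sum>B\<in>P. \<bar>mu B\<bar>) \<le> tv A mu E1 + tv A mu E2" .
qed

lemma tv_additive:
  "ba A mu \<Longrightarrow> E1 \<in> A \<Longrightarrow> E2 \<in> A \<Longrightarrow> E1 \<inter> E2 = {} \<Longrightarrow>
    tv A mu (E1 \<union> E2) = tv A mu E1 + tv A mu E2"
  using tv_superadditive tv_subadditive_disjoint by (meson order_antisym)

lemma tv_subadditive:
  assumes ba: "ba A mu" and E: "E1 \<in> A" "E2 \<in> A"
  shows "tv A mu (E1 \<union> E2) \<le> tv A mu E1 + tv A mu E2"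
proof -
  have "tv A mu (E1 \<union> E2) = tv A mu E1 + tv A mu (E2 - E1)"
    using tv_additive[OF ba E(1) Diff[OF E(2) E(1)]] by (simp add: Un_Diff_cancel)
  also have "tv A mu (E2 - E1) \<le> tv A mu E2" by (rule tv_mono[OF ba]) auto
  finally show ?thesis by simp
qed

lemma tv_UN_le:
  assumes ba: "ba A mu" and I: "finite I" and F: "\<And>i. i \<in> I \<Longrightarrow> F i \<in> A"
  shows "tv A mu (\<Union>i\<in>I. F i) \<le> (\<Sum>i\<in>I. tv A mu (F i))"
  using I F
proof (induction I rule: finite_induct)
  case empty
  then show ?case using tv_empty[OF ba] by simp
next
  case (insert x I)
  have "tv A mu (F x \<union> (\<Union>i\<in>I. F i)) \<le> tv A mu (F x) + tv A mu (\<Union>i\<in>I. F i)"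
    using insert by (intro tv_subadditive[OF ba]) auto
  then show ?case using insert by simp
qed

lemma singular_sym:
  assumes "singular \<Omega> A nu mu"
  shows "singular \<Omega> A mu nu"
  unfolding singular_def
proof (intro allI impI)
  fix \<epsilon> :: real assume "\<epsilon> > 0"
  then obtain E where E: "E \<in> A" "tv A nu E + tv A mu (\<Omega> - E) < \<epsilon>"
    using assms unfolding singular_def by blast
  have "\<Omega> - (\<Omega> - E) = E" using sets_into_space[OF E(1)] by blast
  then have "tv A mu (\<Omega> - E) + tv A nu (\<Omega> - (\<Omega> - E)) < \<epsilon>" using E(2) by simp
  then show "\<exists>E\<in>A. tv A mu E + tv A nu (\<Omega> - E) < \<epsilon>" using Diff[OF top E(1)] by blast
qed

text \<open>If \<open>|nu| \<le> |nu1| + |nu2|\<close> and \<open>nu1, nu2 \<bottom> mu\<close>, then \<open>nu \<bottom> mu\<close>: intersect the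
  witnessing sets.\<close>
lemma singular_dominated:
  assumes ba: "ba A nu1" "ba A nu2" "ba A mu"
    and dom: "\<And>E. E \<in> A \<Longrightarrow> tv A nu E \<le> tv A nu1 E + tv A nu2 E"
    and sing: "singular \<Omega> A nu1 mu" "singular \<Omega> A nu2 mu"
  shows "singular \<Omega> A nu mu"
  unfolding singular_def
proof (intro allI impI)
  fix \<epsilon> :: real assume "\<epsilon> > 0"
  then have e: "\<epsilon> / 2 > 0" by simp
  obtain E1 where E1: "E1 \<in> A" "tv A nu1 E1 + tv A mu (\<Omega> - E1) < \<epsilon> / 2"
    using sing(1) e unfolding singular_def by blast
  obtain E2 where E2: "E2 \<in> A" "tv A nu2 E2 + tv A mu (\<Omega> - E2) < \<epsilon> / 2"
    using sing(2) e unfolding singular_def by blast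
  have E: "E1 \<inter> E2 \<in> A" using E1(1) E2(1) by (rule Int)
  have "tv A nu (E1 \<inter> E2) \<le> tv A nu1 (E1 \<inter> E2) + tv A nu2 (E1 \<inter> E2)"
    by (rule dom[OF E])
  also have "\<dots> \<le> tv A nu1 E1 + tv A nu2 E2"
    by (intro add_mono tv_mono[OF ba(1)] tv_mono[OF ba(2)]) auto
  finally have "tv A nu (E1 \<inter> E2) \<le> tv A nu1 E1 + tv A nu2 E2" .
  moreover have "tv A mu (\<Omega> - (E1 \<inter> E2)) \<le> tv A mu (\<Omega> - E1) + tv A mu (\<Omega> - E2)"
    using tv_subadditive[OF ba(3) Diff[OF top E1(1)] Diff[OF top E2(1)]] by (simp add: Diff_Int)
  ultimately have "tv A nu (E1 \<inter> E2) + tv A mu (\<Omega> - (E1 \<inter> E2)) < \<epsilon>"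
    using E1(2) E2(2) by linarith
  then show "\<exists>E\<in>A. tv A nu E + tv A mu (\<Omega> - E) < \<epsilon>" using E by blast
qed

lemma singular_add:
  "ba A nu1 \<Longrightarrow> ba A nu2 \<Longrightarrow> ba A mu \<Longrightarrow> singular \<Omega> A nu1 mu \<Longrightarrow> singular \<Omega> A nu2 mu \<Longrightarrow>
    singular \<Omega> A (\<lambda>E. nu1 E + nu2 E) mu"
  by (rule singular_dominated[OF _ _ _ tv_add_le])

lemma singular_diff:
  "ba A nu1 \<Longrightarrow> ba A nu2 \<Longrightarrow> ba A mu \<Longrightarrow> singular \<Omega> A nu1 mu \<Longrightarrow> singular \<Omega> A nu2 mu \<Longrightarrow>
    singular \<Omega> A (\<lambda>E. nu1 E - nu2 E) mu"
  by (rule singular_dominated[OF _ _ _ tv_diff_le])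

lemma singular_add_right:
  assumes "ba A nu" "ba A mu1" "ba A mu2" "singular \<Omega> A nu mu1" "singular \<Omega> A nu mu2"
  shows "singular \<Omega> A nu (\<lambda>E. mu1 E + mu2 E)"
  using singular_add[OF assms(2,3,1) singular_sym[OF assms(4)] singular_sym[OF assms(5)]]
  by (rule singular_sym)

lemma singular_cong:
  assumes "\<And>E. E \<in> A \<Longrightarrow> nu E = nu' E"
  shows "singular \<Omega> A nu mu \<longleftrightarrow> singular \<Omega> A nu' mu"
proof -
  have "tv A nu = tv A nu'" by (rule ext) (rule tv_cong[OF assms])
  then show ?thesis unfolding singular_def by simp
qed

lemma abs_cont_mono:
  assumes le: "\<And>E. E \<in> A \<Longrightarrow> tv A m E \<le> tv A n E" and ac: "abs_cont A m c"
  shows "abs_cont A n c"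
  unfolding abs_cont_def
proof (intro allI impI)
  fix \<epsilon> :: real assume "\<epsilon> > 0"
  then obtain \<delta> where d: "\<delta> > 0" "\<forall>E\<in>A. tv A m E < \<delta> \<longrightarrow> tv A c E < \<epsilon>"
    using ac unfolding abs_cont_def by blast
  have "tv A c E < \<epsilon>" if "E \<in> A" "tv A n E < \<delta>" for E
    using d(2) that le_less_trans[OF le[OF that(1)] that(2)] by blast
  then show "\<exists>\<delta>>0. \<forall>E\<in>A. tv A n E < \<delta> \<longrightarrow> tv A c E < \<epsilon>"
    using d(1) by blast
qed

lemma abs_cont_diff:
  assumes ba: "ba A c1" "ba A c2" and ac: "abs_cont A n c1" "abs_cont A n c2"
  shows "abs_cont A n (\<lambda>E. c1 E - c2 E)"
  unfolding abs_cont_def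
proof (intro allI impI)
  fix \<epsilon> :: real assume "\<epsilon> > 0"
  then have e: "\<epsilon> / 2 > 0" by simp
  obtain \<delta>1 where d1: "\<delta>1 > 0" "\<forall>E\<in>A. tv A n E < \<delta>1 \<longrightarrow> tv A c1 E < \<epsilon> / 2"
    using ac(1) e unfolding abs_cont_def by blast
  obtain \<delta>2 where d2: "\<delta>2 > 0" "\<forall>E\<in>A. tv A n E < \<delta>2 \<longrightarrow> tv A c2 E < \<epsilon> / 2"
    using ac(2) e unfolding abs_cont_def by blast
  have "tv A (\<lambda>E. c1 E - c2 E) E < \<epsilon>" if "E \<in> A" "tv A n E < min \<delta>1 \<delta>2" for E
  proof -
    have "tv A c1 E < \<epsilon> / 2" "tv A c2 E < \<epsilon> / 2" using d1(2) d2(2) that by auto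
    then show ?thesis using tv_diff_le[OF ba, of E] by linarith
  qed
  then show "\<exists>\<delta>>0. \<forall>E\<in>A. tv A n E < \<delta> \<longrightarrow> tv A (\<lambda>E. c1 E - c2 E) E < \<epsilon>"
    using d1(1) d2(1) by (intro exI[of _ "min \<delta>1 \<delta>2"]) auto
qed

text \<open>A set function that is both absolutely continuous and singular with respect to
  the same \<open>n\<close> vanishes: its whole variation lives on a set that is small for \<open>n\<close>.\<close>
lemma abs_cont_singular_zero:
  assumes ba: "ba A d" "ba A n" and ac: "abs_cont A n d" and sing: "singular \<Omega> A d n"
    and E: "E \<in> A"
  shows "d E = 0"
proof -
  have small: "tv A d \<Omega> \<le> 0 + \<epsilon>" if "\<epsilon> > 0" for \<epsilon>
  proof -
    have e: "\<epsilon> / 2 > 0" using that by simp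
    obtain \<delta> where d: "\<delta> > 0" "\<forall>E\<in>A. tv A n E < \<delta> \<longrightarrow> tv A d E < \<epsilon> / 2"
      using ac e unfolding abs_cont_def by blast
    have "min (\<epsilon> / 2) \<delta> > 0" using d(1) e by simp
    then obtain F where F: "F \<in> A" "tv A d F + tv A n (\<Omega> - F) < min (\<epsilon> / 2) \<delta>"
      using sing unfolding singular_def by blast
    have CF: "\<Omega> - F \<in> A" using F(1) by (rule Diff[OF top])
    have "tv A d F < \<epsilon> / 2" "tv A n (\<Omega> - F) < \<delta>"
      using F(2) tv_nonneg[OF ba(1), of F] tv_nonneg[OF ba(2), of "\<Omega> - F"] by auto
    then have "tv A d F + tv A d (\<Omega> - F) < \<epsilon>" using d(2) CF by fastforce
    moreover have "F \<union> (\<Omega> - F) = \<Omega>" using sets_into_space[OF F(1)] by blast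
    ultimately show ?thesis using tv_additive[OF ba(1) F(1) CF] by simp
  qed
  have "\<bar>d E\<bar> \<le> tv A d \<Omega>"
    using abs_le_tv[OF ba(1) E] tv_le_norm[OF ba(1) E] unfolding ba_norm_def by linarith
  then show ?thesis using field_le_epsilon[OF small] by linarith
qed

lemma ca_diff:
  "countably_additive_setfun A a \<Longrightarrow> countably_additive_setfun A b \<Longrightarrow>
    countably_additive_setfun A (\<lambda>E. a E - b E)"
  unfolding countably_additive_setfun_def by (simp add: sums_diff)

lemma ca_dominated:
  assumes bap: "ba A p" and cap: "countably_additive_setfun A p"
    and fan: "fin_additive A nu" and posn: "positive_setfun A nu"
    and le: "\<And>E. E \<in> A \<Longrightarrow> nu E \<le> p E"
  shows "countably_additive_setfun A nu"
  unfolding countably_additive_setfun_def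
proof (intro allI impI)
  fix F :: "nat \<Rightarrow> 'a set" assume F: "range F \<subseteq> A" "disjoint_family F" and U: "(\<Union>n. F n) \<in> A"
  let ?U = "\<Union>n. F n"
  let ?rest = "\<lambda>N. ?U - (\<Union>i<N. F i)"
  have "(\<Union>i<N. F i) \<in> A" for N using F(1) by (intro finite_UN) auto
  then have rest: "?rest N \<in> A" for N using U by blast
  have partial_sum: "(\<Sum>i<N. mu (F i)) = mu ?U - mu (?rest N)" if "fin_additive A mu" for mu N
    using fa_diff[OF that U, of "\<Union>i<N. F i"] fa_UN_lessThan[OF that F] F(1) by force
  have "(\<lambda>n. p (F n)) sums p ?U" using cap F U unfolding countably_additive_setfun_def by blast
  then have "(\<lambda>N. p ?U - p (?rest N)) \<longlonglongrightarrow> p ?U"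
    unfolding sums_def partial_sum[OF ba_fin_additive[OF bap]] .
  then have "(\<lambda>N. p ?U - (p ?U - p (?rest N))) \<longlonglongrightarrow> p ?U - p ?U" by (intro tendsto_intros)
  then have p0: "(\<lambda>N. p (?rest N)) \<longlonglongrightarrow> 0" by simp
  have "(\<lambda>N. nu (?rest N)) \<longlonglongrightarrow> 0"
  proof (rule tendsto_sandwich[OF _ _ tendsto_const p0])
    show "\<forall>\<^sub>F N in sequentially. 0 \<le> nu (?rest N)" using posn rest unfolding positive_setfun_def by simp
    show "\<forall>\<^sub>F N in sequentially. nu (?rest N) \<le> p (?rest N)" using le rest by simp
  qed
  then have "(\<lambda>N. nu ?U - nu (?rest N)) \<longlonglongrightarrow> nu ?U - 0" by (intro tendsto_intros)
  then show "(\<lambda>n. nu (F n)) sums nu ?U"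
    unfolding sums_def partial_sum[OF fan] by simp
qed

lemma ca_dominated_split:
  assumes p: "ba A p" "countably_additive_setfun A p"
    and s: "ba A s" "positive_setfun A s" "\<And>E. E \<in> A \<Longrightarrow> s E \<le> p E"
  shows "countably_additive_setfun A s \<and> countably_additive_setfun A (\<lambda>E. p E - s E)"
proof -
  have "countably_additive_setfun A s" by (rule ca_dominated[OF p ba_fin_additive[OF s(1)] s(2,3)])
  then show ?thesis using p(2) ca_diff by blast
qed

text \<open>The positive variation \<open>mu\<^sup>+(E) = sup {mu F | F \<subseteq> E}\<close>, giving the Jordan
  decomposition \<open>mu = mu\<^sup>+ - (mu\<^sup>+ - mu)\<close> into two positive members of \<open>ba(A)\<close>.\<close>
definition positive_variation :: "('a set \<Rightarrow> real) \<Rightarrow> 'a set \<Rightarrow> real" where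
  "positive_variation mu E = Sup {mu F | F. F \<in> A \<and> F \<subseteq> E}"

lemma positive_variation_ge:
  assumes "ba A mu" "F \<in> A" "F \<subseteq> E"
  shows "mu F \<le> positive_variation mu E"
proof -
  obtain K where "\<forall>a\<in>A. \<bar>mu a\<bar> \<le> K" using assms(1) unfolding ba_def bdd_setfun_def by blast
  then have "bdd_above {mu F | F. F \<in> A \<and> F \<subseteq> E}" by (intro bdd_aboveI[of _ K]) auto
  then show ?thesis unfolding positive_variation_def using assms(2,3) by (intro cSup_upper) auto
qed

lemma positive_variation_le:
  "(\<And>F. F \<in> A \<Longrightarrow> F \<subseteq> E \<Longrightarrow> mu F \<le> c) \<Longrightarrow> positive_variation mu E \<le> c"
  unfolding positive_variation_def by (rule cSup_least) auto

lemma positive_variation_nonneg: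
  assumes "ba A mu" shows "0 \<le> positive_variation mu E"
  using positive_variation_ge[OF assms, of "{}" E] fa_empty[OF ba_fin_additive[OF assms]] by simp

lemma positive_variation_fin_additive:
  assumes ba: "ba A mu"
  shows "fin_additive A (positive_variation mu)"
  unfolding fin_additive_def
proof (intro ballI impI)
  fix E1 E2 assume E: "E1 \<in> A" "E2 \<in> A" "E1 \<inter> E2 = {}"
  have fa: "fin_additive A mu" using ba by (rule ba_fin_additive)
  show "positive_variation mu (E1 \<union> E2) = positive_variation mu E1 + positive_variation mu E2"
  proof (rule order_antisym)
    show "positive_variation mu (E1 \<union> E2) \<le> positive_variation mu E1 + positive_variation mu E2"
    proof (rule positive_variation_le)
      fix F assume F: "F \<in> A" "F \<subseteq> E1 \<union> E2"
      have "F - E1 = F \<inter> E2" using F(2) E(3) by blast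
      then have "mu F = mu (F \<inter> E1) + mu (F \<inter> E2)" using fa_split[OF fa F(1) E(1)] by simp
      also have "\<dots> \<le> positive_variation mu E1 + positive_variation mu E2"
        using F E by (intro add_mono positive_variation_ge[OF ba]) auto
      finally show "mu F \<le> positive_variation mu E1 + positive_variation mu E2" .
    qed
    show "positive_variation mu E1 + positive_variation mu E2 \<le> positive_variation mu (E1 \<union> E2)"
      unfolding positive_variation_def[of mu E1] positive_variation_def[of mu E2]
    proof (rule cSup_add_le)
      fix a b assume "a \<in> {mu F |F. F \<in> A \<and> F \<subseteq> E1}" "b \<in> {mu F |F. F \<in> A \<and> F \<subseteq> E2}"
      then obtain F1 F2 where F: "a = mu F1" "F1 \<in> A" "F1 \<subseteq> E1" "b = mu F2" "F2 \<in> A" "F2 \<subseteq> E2"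
        by blast
      have "F1 \<inter> F2 = {}" using F(3,6) E(3) by blast
      then have "a + b = mu (F1 \<union> F2)" using fin_additiveD[OF fa F(2) F(5)] F(1,4) by simp
      also have "\<dots> \<le> positive_variation mu (E1 \<union> E2)"
        using F by (intro positive_variation_ge[OF ba]) auto
      finally show "a + b \<le> positive_variation mu (E1 \<union> E2)" .
    qed blast+
  qed
qed

lemma positive_variation_ba:
  assumes ba: "ba A mu"
  shows "ba A (positive_variation mu)"
proof -
  obtain K where K: "\<forall>a\<in>A. \<bar>mu a\<bar> \<le> K" using ba unfolding ba_def bdd_setfun_def by blast
  have "positive_variation mu E \<le> K" for E by (rule positive_variation_le) (use K in auto)
  then have "\<forall>a\<in>A. \<bar>positive_variation mu a\<bar> \<le> K"
    using positive_variation_nonneg[OF ba] by simp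
  then show ?thesis
    unfolding ba_def bdd_setfun_def using positive_variation_fin_additive[OF ba] by blast
qed

lemma positive_variation_of_positive:
  assumes ba: "ba A mu" and pos: "positive_setfun A mu" and E: "E \<in> A"
  shows "positive_variation mu E = mu E"
proof (rule order_antisym)
  show "positive_variation mu E \<le> mu E"
    by (rule positive_variation_le) (use positive_mono[OF ba_fin_additive[OF ba] pos _ E] in auto)
  show "mu E \<le> positive_variation mu E" using positive_variation_ge[OF ba E] by simp
qed

text \<open>The positive variation of a countably additive set function is countably additive:
  on a disjoint union it is at most the sum of the pieces by countable additivity of \<open>mu\<close>,
  and at least that sum by finite additivity and positivity.\<close>
lemma positive_variation_ca:
  assumes ba: "ba A mu" and ca: "countably_additive_setfun A mu"
  shows "countably_additive_setfun A (positive_variation mu)"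
  unfolding countably_additive_setfun_def
proof (intro allI impI)
  fix F :: "nat \<Rightarrow> 'a set" assume F: "range F \<subseteq> A" "disjoint_family F" and U: "(\<Union>n. F n) \<in> A"
  let ?U = "\<Union>n. F n" and ?P = "positive_variation mu"
  have faP: "fin_additive A ?P" using ba by (rule positive_variation_fin_additive)
  have posP: "positive_setfun A ?P"
    unfolding positive_setfun_def using positive_variation_nonneg[OF ba] by blast
  have partial: "(\<Sum>i<N. ?P (F i)) \<le> ?P ?U" for N
  proof -
    have "(\<Union>i<N. F i) \<in> A" using F(1) by (intro finite_UN) auto
    then have "?P (\<Union>i<N. F i) \<le> ?P ?U" by (intro positive_mono[OF faP posP _ U]) auto
    then show ?thesis using fa_UN_lessThan[OF faP F] by simp
  qed
  have summ: "summable (\<lambda>n. ?P (F n))"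
    by (rule summableI_nonneg_bounded[OF positive_variation_nonneg[OF ba] partial])
  have "?P ?U \<le> (\<Sum>n. ?P (F n))"
  proof (rule positive_variation_le)
    fix G assume G: "G \<in> A" "G \<subseteq> ?U"
    have GF: "range (\<lambda>n. G \<inter> F n) \<subseteq> A" using F(1) G(1) by auto
    have "disjoint_family (\<lambda>n. G \<inter> F n)" using F(2) unfolding disjoint_family_on_def by auto
    moreover have "(\<Union>n. G \<inter> F n) = G" using G(2) by auto
    ultimately have s: "(\<lambda>n. mu (G \<inter> F n)) sums mu G"
      using ca GF G(1) unfolding countably_additive_setfun_def by metis
    have "mu (G \<inter> F n) \<le> ?P (F n)" for n using GF by (intro positive_variation_ge[OF ba]) auto
    then show "mu G \<le> (\<Sum>n. ?P (F n))"
      using s summ by (metis sums_unique sums_summable suminf_le)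
  qed
  then show "(\<lambda>n. ?P (F n)) sums ?P ?U"
    using summ suminf_le_const[OF summ partial] by (simp add: sums_iff)
qed

lemma jordan_decomposition:
  assumes ba: "ba A lam"
  obtains P N where "ba A P" "ba A N" "positive_setfun A P" "positive_setfun A N"
    "\<And>E. E \<in> A \<Longrightarrow> lam E = P E - N E"
    "positive_setfun A lam \<Longrightarrow> \<forall>E\<in>A. N E = 0"
    "countably_additive_setfun A lam \<Longrightarrow>
       countably_additive_setfun A P \<and> countably_additive_setfun A N"
proof
  let ?P = "positive_variation lam"
  show "ba A ?P" using ba by (rule positive_variation_ba)
  then show "ba A (\<lambda>E. ?P E - lam E)" using ba by (rule ba_diff)
  show "positive_setfun A ?P"
    unfolding positive_setfun_def using positive_variation_nonneg[OF ba] by blast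
  show "positive_setfun A (\<lambda>E. ?P E - lam E)"
    unfolding positive_setfun_def using positive_variation_ge[OF ba] by auto
  show "lam E = ?P E - (?P E - lam E)" for E by simp
  show "positive_setfun A lam \<Longrightarrow> \<forall>E\<in>A. ?P E - lam E = 0"
    using positive_variation_of_positive[OF ba] by simp
  show "countably_additive_setfun A lam \<Longrightarrow>
      countably_additive_setfun A ?P \<and> countably_additive_setfun A (\<lambda>E. ?P E - lam E)"
    using positive_variation_ca[OF ba] ca_diff by blast
qed

end

locale convex_combination = set_algebra +
  fixes \<alpha> :: "nat \<Rightarrow> real" and mus :: "nat \<Rightarrow> 'a set \<Rightarrow> real"
  assumes ba_mus: "\<And>n. ba A (mus n)" and \<alpha>_nonneg: "\<And>n. 0 \<le> \<alpha> n" and \<alpha>_sums: "\<alpha> sums 1"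
begin

definition weighted :: "nat \<Rightarrow> 'a set \<Rightarrow> real" where
  "weighted n E = \<alpha> n * (tv A (mus n) E / max 1 (ba_norm \<Omega> A (mus n)))"

definition comb :: "'a set \<Rightarrow> real" where
  "comb E = (\<Sum>n. weighted n E)"

lemma \<alpha>_summable: "summable \<alpha>"
  using \<alpha>_sums by (simp add: sums_iff)

lemma \<alpha>_le_1: "\<alpha> n \<le> 1"
  using sum_le_suminf[OF \<alpha>_summable, of "{n}"] \<alpha>_nonneg \<alpha>_sums by (simp add: sums_iff)

lemma weighted_bounds:
  assumes E: "E \<in> A"
  shows "0 \<le> weighted n E" "weighted n E \<le> \<alpha> n" "weighted n E \<le> tv A (mus n) E"
proof -
  let ?t = "tv A (mus n) E" and ?c = "max 1 (ba_norm \<Omega> A (mus n))"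
  have t: "0 \<le> ?t" "?t \<le> ?c"
    using tv_nonneg[OF ba_mus, of n E] tv_le_norm[OF ba_mus E, of n] by (auto simp: le_max_iff_disj)
  have c: "1 \<le> ?c" by simp
  have q0: "0 \<le> ?t / ?c" using t c by simp
  have q1: "?t / ?c \<le> 1" using t c by simp
  have "?t / ?c \<le> ?t / 1" using t c by (intro divide_left_mono) auto
  then have q2: "?t / ?c \<le> ?t" by simp
  show "0 \<le> weighted n E" unfolding weighted_def using mult_nonneg_nonneg[OF \<alpha>_nonneg q0] .
  show "weighted n E \<le> \<alpha> n" unfolding weighted_def using mult_left_le[OF q1 \<alpha>_nonneg] .
  have "weighted n E \<le> 1 * (?t / ?c)"
    unfolding weighted_def using \<alpha>_le_1 q0 by (intro mult_right_mono) auto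
  then show "weighted n E \<le> ?t" using q2 by simp
qed

lemma summable_weighted: "E \<in> A \<Longrightarrow> summable (\<lambda>n. weighted n E)"
  by (rule summable_comparison_test[OF _ \<alpha>_summable]) (use weighted_bounds in auto)

lemma weighted_le_comb: "E \<in> A \<Longrightarrow> weighted n E \<le> comb E"
  unfolding comb_def
  using sum_le_suminf[OF summable_weighted, of E "{n}"] weighted_bounds by auto

lemma comb_nonneg: "E \<in> A \<Longrightarrow> 0 \<le> comb E"
  unfolding comb_def using summable_weighted weighted_bounds by (simp add: suminf_nonneg)

lemma comb_le_1: "E \<in> A \<Longrightarrow> comb E \<le> 1"
  unfolding comb_def
  using suminf_le[OF _ summable_weighted \<alpha>_summable] weighted_bounds \<alpha>_sums by (auto simp: sums_iff)

lemma comb_ba: "ba A comb"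
proof -
  have "fin_additive A comb" unfolding fin_additive_def
  proof (intro ballI impI)
    fix E1 E2 assume E: "E1 \<in> A" "E2 \<in> A" "E1 \<inter> E2 = {}"
    have "weighted n (E1 \<union> E2) = weighted n E1 + weighted n E2" for n
      unfolding weighted_def using tv_additive[OF ba_mus E] by (simp add: add_divide_distrib distrib_left)
    then show "comb (E1 \<union> E2) = comb E1 + comb E2"
      unfolding comb_def using suminf_add[OF summable_weighted[OF E(1)] summable_weighted[OF E(2)]] by simp
  qed
  moreover have "\<forall>E\<in>A. \<bar>comb E\<bar> \<le> 1" using comb_nonneg comb_le_1 by simp
  ultimately show ?thesis unfolding ba_def bdd_setfun_def by blast
qed

lemma comb_positive: "positive_setfun A comb"
  unfolding positive_setfun_def using comb_nonneg by blast

lemma tv_comb: "E \<in> A \<Longrightarrow> tv A comb E = comb E"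
  by (rule tv_positive[OF comb_ba comb_positive])

lemma comb_le_head:
  assumes E: "E \<in> A"
  shows "comb E \<le> (\<Sum>n<N. tv A (mus n) E) + (1 - (\<Sum>n<N. \<alpha> n))"
proof -
  have "comb E = (\<Sum>k. weighted (k + N) E) + (\<Sum>n<N. weighted n E)"
    unfolding comb_def by (rule suminf_split_initial_segment[OF summable_weighted[OF E]])
  also have "(\<Sum>k. weighted (k + N) E) \<le> (\<Sum>k. \<alpha> (k + N))"
    using weighted_bounds[OF E] summable_weighted[OF E] \<alpha>_summable
    by (intro suminf_le summable_ignore_initial_segment) auto
  also have "(\<Sum>k. \<alpha> (k + N)) = 1 - (\<Sum>n<N. \<alpha> n)"
    using suminf_split_initial_segment[OF \<alpha>_summable, of N] \<alpha>_sums by (simp add: sums_iff)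
  also have "(\<Sum>n<N. weighted n E) \<le> (\<Sum>n<N. tv A (mus n) E)"
    using weighted_bounds[OF E] by (intro sum_mono) auto
  finally show ?thesis by simp
qed

lemma comb_singular:
  assumes ba: "ba A nu" and sing: "\<And>n. singular \<Omega> A nu (mus n)"
  shows "singular \<Omega> A nu comb"
  unfolding singular_def
proof (intro allI impI)
  fix \<epsilon> :: real assume "\<epsilon> > 0"
  then have e: "\<epsilon> / 2 > 0" by simp
  have "(\<lambda>N. \<Sum>n<N. \<alpha> n) \<longlonglongrightarrow> 1" using \<alpha>_sums by (simp add: sums_def)
  then have "\<forall>\<^sub>F N in sequentially. 1 - \<epsilon> / 2 < (\<Sum>n<N. \<alpha> n)" using e by (intro order_tendstoD) auto
  then obtain N where "\<forall>n\<ge>N. 1 - \<epsilon> / 2 < (\<Sum>i<n. \<alpha> i)" unfolding eventually_sequentially by blast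
  then have N: "1 - (\<Sum>n<N. \<alpha> n) < \<epsilon> / 2" by auto
  define \<delta> where "\<delta> = \<epsilon> / 2 / (real N + 1)"
  have d: "\<delta> > 0" using e unfolding \<delta>_def by simp
  have "real N * \<delta> = \<epsilon> / 2 * (real N / (real N + 1))" unfolding \<delta>_def by simp
  also have "\<dots> < \<epsilon> / 2 * 1" by (rule mult_strict_left_mono[OF _ e]) simp
  also have "\<dots> = \<epsilon> / 2" by simp
  finally have Nd: "real N * \<delta> < \<epsilon> / 2" .
  have "\<forall>n. \<exists>F. F \<in> A \<and> tv A nu F + tv A (mus n) (\<Omega> - F) < \<delta>"
    using sing d unfolding singular_def by blast
  from choice[OF this] obtain Ef
    where "\<forall>n. Ef n \<in> A \<and> tv A nu (Ef n) + tv A (mus n) (\<Omega> - Ef n) < \<delta>" by blast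
  then have Ef: "\<And>n. Ef n \<in> A" "\<And>n. tv A nu (Ef n) + tv A (mus n) (\<Omega> - Ef n) < \<delta>" by auto
  define E where "E = (\<Union>n<N. Ef n)"
  have EA: "E \<in> A" unfolding E_def using Ef(1) by (intro finite_UN) auto
  then have CA: "\<Omega> - E \<in> A" by (rule Diff[OF top])
  have nuE: "tv A nu E \<le> (\<Sum>n<N. tv A nu (Ef n))"
    unfolding E_def by (rule tv_UN_le[OF ba]) (use Ef(1) in auto)
  have "(\<Sum>n<N. tv A (mus n) (\<Omega> - E)) \<le> (\<Sum>n<N. tv A (mus n) (\<Omega> - Ef n))"
    unfolding E_def by (intro sum_mono tv_mono[OF ba_mus]) auto
  then have combE: "comb (\<Omega> - E) \<le> (\<Sum>n<N. tv A (mus n) (\<Omega> - Ef n)) + \<epsilon> / 2"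
    using comb_le_head[OF CA, of N] N by linarith
  have "(\<Sum>n<N. tv A nu (Ef n)) + (\<Sum>n<N. tv A (mus n) (\<Omega> - Ef n)) \<le> (\<Sum>n<N. \<delta>)"
    unfolding sum.distrib[symmetric] using Ef(2) by (intro sum_mono less_imp_le)
  then have "tv A nu E + comb (\<Omega> - E) < \<epsilon>" using nuE combE Nd by simp
  then have "tv A nu E + tv A comb (\<Omega> - E) < \<epsilon>" using tv_comb[OF CA] by simp
  then show "\<exists>E\<in>A. tv A nu E + tv A comb (\<Omega> - E) < \<epsilon>" using EA by blast
qed

end

context set_algebra
begin

lemma convA_properties:
  assumes Mba: "Ms \<subseteq> {mu. ba A mu}" and m: "m \<in> convA \<Omega> A Ms"
  shows "ba A m" "positive_setfun A m"
    and "\<And>nu. ba A nu \<Longrightarrow> \<forall>mu\<in>Ms. singular \<Omega> A nu mu \<Longrightarrow> singular \<Omega> A nu m"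
proof -
  obtain \<alpha> mus where am: "\<forall>n. mus n \<in> Ms" "\<forall>n. 0 \<le> \<alpha> n" "\<alpha> sums 1"
    and m_eq: "m = (\<lambda>E. \<Sum>n. \<alpha> n * (tv A (mus n) E / max 1 (ba_norm \<Omega> A (mus n))))"
    using m unfolding convA_def mem_Collect_eq by blast
  have "ba A (mus n)" for n using am(1) Mba by blast
  then interpret convex_combination \<Omega> A \<alpha> mus using am(2,3) by unfold_locales auto
  have m_comb: "m = comb" unfolding m_eq by (rule ext) (simp only: comb_def weighted_def)
  show "ba A m" unfolding m_comb by (rule comb_ba)
  show "positive_setfun A m" unfolding m_comb by (rule comb_positive)
  show "singular \<Omega> A nu m" if "ba A nu" "\<forall>mu\<in>Ms. singular \<Omega> A nu mu" for nu
    unfolding m_comb using that am(1) by (intro comb_singular) auto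
qed

text \<open>Every countable nonempty \<open>T \<subseteq> Ms\<close> is dominated by a single member of \<open>convA\<close>:
  enumerate \<open>T\<close> and take the weights \<open>2\<^sup>-\<^sup>n\<^sup>-\<^sup>1\<close>.\<close>
lemma convA_dominating:
  assumes T: "countable T" "T \<noteq> {}" "T \<subseteq> Ms" and Mba: "Ms \<subseteq> {mu. ba A mu}"
  obtains m where "m \<in> convA \<Omega> A Ms" "\<And>mu. mu \<in> T \<Longrightarrow> \<exists>c>0. \<forall>E\<in>A. tv A mu E \<le> c * m E"
proof -
  define e where "e = from_nat_into T"
  define \<alpha> :: "nat \<Rightarrow> real" where "\<alpha> = (\<lambda>n. (1/2) ^ Suc n)"
  have eM: "e n \<in> Ms" for n unfolding e_def using from_nat_into[OF T(2)] T(3) by blast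
  have \<alpha>: "\<And>n. 0 \<le> \<alpha> n" "\<alpha> sums 1" unfolding \<alpha>_def using power_half_series by auto
  interpret convex_combination \<Omega> A \<alpha> e using eM Mba \<alpha> by unfold_locales auto
  have "comb = (\<lambda>E. \<Sum>n. \<alpha> n * (tv A (e n) E / max 1 (ba_norm \<Omega> A (e n))))"
    by (rule ext) (simp only: comb_def weighted_def)
  then have "comb \<in> convA \<Omega> A Ms"
    unfolding convA_def using eM \<alpha> by blast
  moreover have "\<exists>c>0. \<forall>E\<in>A. tv A mu E \<le> c * comb E" if mu: "mu \<in> T" for mu
  proof -
    obtain n where n: "e n = mu" using from_nat_into_surj[OF T(1) mu] unfolding e_def by blast
    define c where "c = max 1 (ba_norm \<Omega> A mu) / \<alpha> n"
    have an: "\<alpha> n > 0" unfolding \<alpha>_def by simp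
    have mx: "max 1 (ba_norm \<Omega> A mu) > 0" by simp
    have c: "c > 0" unfolding c_def using an mx by simp
    have "tv A mu E \<le> c * comb E" if E: "E \<in> A" for E
    proof -
      have "tv A mu E = c * weighted n E"
        unfolding c_def weighted_def n using an mx by (simp add: field_simps)
      also have "\<dots> \<le> c * comb E" using weighted_le_comb[OF E] c by simp
      finally show ?thesis .
    qed
    then show ?thesis using c by blast
  qed
  ultimately show ?thesis using that by blast
qed

text \<open>For countable \<open>T\<close> this yields absolute continuity with respect to a
  member of \<open>convA\<close>.\<close>
definition controlled :: "('a set \<Rightarrow> real) set \<Rightarrow> ('a set \<Rightarrow> real) \<Rightarrow> bool" where
  "controlled T c \<longleftrightarrow> (\<forall>\<epsilon>>0. \<exists>S \<delta>. finite S \<and> S \<subseteq> T \<and> \<delta> > 0 \<and>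
     (\<forall>E\<in>A. (\<forall>mu\<in>S. tv A mu E < \<delta>) \<longrightarrow> tv A c E < \<epsilon>))"

lemma controlledD:
  assumes "controlled T c" "\<epsilon> > 0"
  obtains S \<delta> where "finite S" "S \<subseteq> T" "\<delta> > 0"
    "\<And>E. E \<in> A \<Longrightarrow> \<forall>mu\<in>S. tv A mu E < \<delta> \<Longrightarrow> tv A c E < \<epsilon>"
  using assms unfolding controlled_def by auto

lemma controlled_mono:
  assumes "T \<subseteq> T'" "controlled T c"
  shows "controlled T' c"
  unfolding controlled_def
proof (intro allI impI)
  fix \<epsilon> :: real assume "\<epsilon> > 0"
  then obtain S \<delta> where S: "finite S" "S \<subseteq> T" "\<delta> > 0"
    "\<And>E. E \<in> A \<Longrightarrow> \<forall>mu\<in>S. tv A mu E < \<delta> \<Longrightarrow> tv A c E < \<epsilon>"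
    by (rule controlledD[OF assms(2)]) (rule that)
  then show "\<exists>S \<delta>. finite S \<and> S \<subseteq> T' \<and> \<delta> > 0 \<and>
      (\<forall>E\<in>A. (\<forall>mu\<in>S. tv A mu E < \<delta>) \<longrightarrow> tv A c E < \<epsilon>)"
    using assms(1) by (intro exI[of _ S] exI[of _ \<delta>]) auto
qed

lemma controlled_diff:
  assumes ba: "ba A c1" "ba A c2" and ctrl: "controlled T c1" "controlled T c2"
  shows "controlled T (\<lambda>E. c1 E - c2 E)"
  unfolding controlled_def
proof (intro allI impI)
  fix \<epsilon> :: real assume "\<epsilon> > 0"
  then have e: "\<epsilon> / 2 > 0" by simp
  obtain S1 \<delta>1 where S1: "finite S1" "S1 \<subseteq> T" "\<delta>1 > 0"
    "\<And>E. E \<in> A \<Longrightarrow> \<forall>mu\<in>S1. tv A mu E < \<delta>1 \<Longrightarrow> tv A c1 E < \<epsilon> / 2"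
    by (rule controlledD[OF ctrl(1) e]) (rule that)
  obtain S2 \<delta>2 where S2: "finite S2" "S2 \<subseteq> T" "\<delta>2 > 0"
    "\<And>E. E \<in> A \<Longrightarrow> \<forall>mu\<in>S2. tv A mu E < \<delta>2 \<Longrightarrow> tv A c2 E < \<epsilon> / 2"
    by (rule controlledD[OF ctrl(2) e]) (rule that)
  have "tv A (\<lambda>E. c1 E - c2 E) E < \<epsilon>"
    if "E \<in> A" "\<forall>mu\<in>S1 \<union> S2. tv A mu E < min \<delta>1 \<delta>2" for E
  proof -
    have "tv A c1 E < \<epsilon> / 2" "tv A c2 E < \<epsilon> / 2" using S1(4) S2(4) that by auto
    then show ?thesis using tv_diff_le[OF ba, of E] by linarith
  qed
  then show "\<exists>S \<delta>. finite S \<and> S \<subseteq> T \<and> \<delta> > 0 \<and>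
      (\<forall>E\<in>A. (\<forall>mu\<in>S. tv A mu E < \<delta>) \<longrightarrow> tv A (\<lambda>E. c1 E - c2 E) E < \<epsilon>)"
    using S1(1-3) S2(1-3) by (intro exI[of _ "S1 \<union> S2"] exI[of _ "min \<delta>1 \<delta>2"]) auto
qed

text \<open>A single member of \<open>convA\<close> dominating (a countable \<open>T\<close> plus one point of the
  nonempty \<open>Ms\<close>) makes every controlled set function absolutely continuous.\<close>
lemma controlled_abs_cont:
  assumes Mba: "Ms \<subseteq> {mu. ba A mu}" and Mne: "Ms \<noteq> {}"
    and T: "countable T" "T \<subseteq> Ms" and ctrl: "controlled T c"
  shows "\<exists>m\<in>convA \<Omega> A Ms. abs_cont A m c"
proof -
  obtain mu0 where mu0: "mu0 \<in> Ms" using Mne by blast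
  have T': "countable (insert mu0 T)" "insert mu0 T \<noteq> {}" "insert mu0 T \<subseteq> Ms"
    using T mu0 by auto
  obtain m where m: "m \<in> convA \<Omega> A Ms"
    and dom: "\<And>mu. mu \<in> insert mu0 T \<Longrightarrow> \<exists>c>0. \<forall>E\<in>A. tv A mu E \<le> c * m E"
    using convA_dominating[OF T' Mba] by blast
  have "\<forall>mu\<in>T. \<exists>c>0. \<forall>E\<in>A. tv A mu E \<le> c * m E" using dom by blast
  from bchoice[OF this] obtain k where k: "\<forall>mu\<in>T. k mu > 0 \<and> (\<forall>E\<in>A. tv A mu E \<le> k mu * m E)"
    by blast
  have m_pos: "\<And>E. E \<in> A \<Longrightarrow> 0 \<le> m E"
    using convA_properties(2)[OF Mba m] unfolding positive_setfun_def by blast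
  have m_tv: "\<And>E. E \<in> A \<Longrightarrow> tv A m E = m E"
    using convA_properties(1,2)[OF Mba m] by (rule tv_positive)
  have "abs_cont A m c" unfolding abs_cont_def
  proof (intro allI impI)
    fix \<epsilon> :: real assume "\<epsilon> > 0"
    then obtain S \<delta> where S: "finite S" "S \<subseteq> T" "\<delta> > 0"
      "\<And>E. E \<in> A \<Longrightarrow> \<forall>mu\<in>S. tv A mu E < \<delta> \<Longrightarrow> tv A c E < \<epsilon>"
      by (rule controlledD[OF ctrl]) (rule that)
    define K where "K = (\<Sum>mu\<in>S. k mu) + 1"
    have kK: "0 < k mu" "k mu \<le> K" if "mu \<in> S" for mu
    proof -
      show "0 < k mu" using k that S(2) by blast
      have "k mu \<le> (\<Sum>mu\<in>S. k mu)"
        using k S(1,2) that by (intro member_le_sum) (auto intro: less_imp_le)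
      then show "k mu \<le> K" unfolding K_def by simp
    qed
    have "0 \<le> (\<Sum>mu\<in>S. k mu)" using kK(1) by (intro sum_nonneg) (simp add: less_imp_le)
    then have K: "K > 0" unfolding K_def by simp
    have "tv A c E < \<epsilon>" if E: "E \<in> A" "tv A m E < \<delta> / K" for E
    proof -
      have "tv A mu E < \<delta>" if mu: "mu \<in> S" for mu
      proof -
        have "tv A mu E \<le> k mu * m E" using k mu S(2) E(1) by blast
        also have "\<dots> \<le> K * m E" using kK[OF mu] m_pos[OF E(1)] by (intro mult_right_mono)
        also have "\<dots> < K * (\<delta> / K)" using E m_tv[OF E(1)] K by (intro mult_strict_left_mono) auto
        finally show ?thesis using K by simp
      qed
      then show ?thesis using S(4) E(1) by blast
    qed
    then show "\<exists>\<delta>>0. \<forall>E\<in>A. tv A m E < \<delta> \<longrightarrow> tv A c E < \<epsilon>"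
      using S(3) K by (intro exI[of _ "\<delta> / K"]) auto
  qed
  then show ?thesis using m by blast
qed

end

locale positive_decomposition = set_algebra +
  fixes Ms :: "('a set \<Rightarrow> real) set" and p :: "'a set \<Rightarrow> real"
  assumes Ms_ba: "\<And>mu. mu \<in> Ms \<Longrightarrow> ba A mu"
    and ba_p: "ba A p" and positive_p: "positive_setfun A p"
begin

definition small_masses :: "('a set \<Rightarrow> real) set \<Rightarrow> real \<Rightarrow> 'a set \<Rightarrow> real set" where
  "small_masses S \<delta> E = {p F | F. F \<in> A \<and> F \<subseteq> E \<and> (\<forall>mu\<in>S. tv A mu F < \<delta>)}"

definition small_mass :: "('a set \<Rightarrow> real) set \<Rightarrow> real \<Rightarrow> 'a set \<Rightarrow> real" where
  "small_mass S \<delta> E = Sup (small_masses S \<delta> E)"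

definition small_mass_values :: "'a set \<Rightarrow> real set" where
  "small_mass_values E = {small_mass S \<delta> E | S \<delta>. finite S \<and> S \<subseteq> Ms \<and> \<delta> > 0}"

definition singular_part :: "'a set \<Rightarrow> real" where
  "singular_part E = Inf (small_mass_values E)"

lemma fa_p: "fin_additive A p"
  using ba_p by (rule ba_fin_additive)

lemma p_le_top: "F \<in> A \<Longrightarrow> p F \<le> p \<Omega>"
  using positive_mono[OF fa_p positive_p] sets_into_space by blast

lemma empty_small_mass: "S \<subseteq> Ms \<Longrightarrow> \<delta> > 0 \<Longrightarrow> p {} \<in> small_masses S \<delta> E"
  unfolding small_masses_def using tv_empty Ms_ba by force

lemma small_masses_ne: "S \<subseteq> Ms \<Longrightarrow> \<delta> > 0 \<Longrightarrow> small_masses S \<delta> E \<noteq> {}"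
  using empty_small_mass by blast

lemma small_masses_bdd: "bdd_above (small_masses S \<delta> E)"
  by (rule bdd_aboveI[of _ "p \<Omega>"]) (auto simp: small_masses_def p_le_top)

lemma small_mass_ge:
  "F \<in> A \<Longrightarrow> F \<subseteq> E \<Longrightarrow> (\<And>mu. mu \<in> S \<Longrightarrow> tv A mu F < \<delta>) \<Longrightarrow> p F \<le> small_mass S \<delta> E"
  unfolding small_mass_def by (rule cSup_upper[OF _ small_masses_bdd]) (auto simp: small_masses_def)

lemma small_mass_le:
  assumes "S \<subseteq> Ms" "\<delta> > 0"
    and "\<And>F. F \<in> A \<Longrightarrow> F \<subseteq> E \<Longrightarrow> \<forall>mu\<in>S. tv A mu F < \<delta> \<Longrightarrow> p F \<le> c"
  shows "small_mass S \<delta> E \<le> c"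
  unfolding small_mass_def
  by (rule cSup_least[OF small_masses_ne[OF assms(1,2)]]) (use assms(3) in \<open>auto simp: small_masses_def\<close>)

lemma small_mass_nonneg: "S \<subseteq> Ms \<Longrightarrow> \<delta> > 0 \<Longrightarrow> 0 \<le> small_mass S \<delta> E"
  using cSup_upper[OF empty_small_mass small_masses_bdd] fa_empty[OF fa_p]
  unfolding small_mass_def by fastforce

lemma small_mass_le_p: "S \<subseteq> Ms \<Longrightarrow> \<delta> > 0 \<Longrightarrow> E \<in> A \<Longrightarrow> small_mass S \<delta> E \<le> p E"
  by (rule small_mass_le) (auto intro: positive_mono[OF fa_p positive_p])

lemma small_mass_anti:
  assumes "S \<subseteq> S'" "S' \<subseteq> Ms" "0 < \<delta>'" "\<delta>' \<le> \<delta>"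
  shows "small_mass S' \<delta>' E \<le> small_mass S \<delta> E"
proof (rule small_mass_le[OF assms(2,3)])
  fix F assume F: "F \<in> A" "F \<subseteq> E" "\<forall>mu\<in>S'. tv A mu F < \<delta>'"
  show "p F \<le> small_mass S \<delta> E"
    by (rule small_mass_ge[OF F(1,2)]) (use F(3) assms(1,4) in fastforce)
qed

lemma small_mass_subadditive:
  assumes S: "S \<subseteq> Ms" "\<delta> > 0" and E: "E1 \<in> A" "E2 \<in> A" "E1 \<inter> E2 = {}"
  shows "small_mass S \<delta> (E1 \<union> E2) \<le> small_mass S \<delta> E1 + small_mass S \<delta> E2"
proof (rule small_mass_le[OF S])
  fix F assume F: "F \<in> A" "F \<subseteq> E1 \<union> E2" "\<forall>mu\<in>S. tv A mu F < \<delta>"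
  have "F - E1 = F \<inter> E2" using F(2) E(3) by blast
  then have "p F = p (F \<inter> E1) + p (F \<inter> E2)" using fa_split[OF fa_p F(1) E(1)] by simp
  also have "\<dots> \<le> small_mass S \<delta> E1 + small_mass S \<delta> E2"
  proof (intro add_mono small_mass_ge)
    fix mu assume "mu \<in> S"
    then show "tv A mu (F \<inter> E1) < \<delta>" "tv A mu (F \<inter> E2) < \<delta>"
      using F(3) tv_mono[OF Ms_ba, of mu] S(1) by (meson Int_lower1 le_less_trans subsetD)+
  qed (use F E in auto)
  finally show "p F \<le> small_mass S \<delta> E1 + small_mass S \<delta> E2" .
qed

lemma small_mass_join:
  assumes S: "S \<subseteq> Ms" "\<delta>1 > 0" "\<delta>2 > 0" and E: "E1 \<in> A" "E2 \<in> A" "E1 \<inter> E2 = {}"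
  shows "small_mass S \<delta>1 E1 + small_mass S \<delta>2 E2 \<le> small_mass S (\<delta>1 + \<delta>2) (E1 \<union> E2)"
  unfolding small_mass_def[of S \<delta>1] small_mass_def[of S \<delta>2]
proof (rule cSup_add_le)
  show "small_masses S \<delta>1 E1 \<noteq> {}" "small_masses S \<delta>2 E2 \<noteq> {}"
    using empty_small_mass S by blast+
  fix a b assume "a \<in> small_masses S \<delta>1 E1" "b \<in> small_masses S \<delta>2 E2"
  then obtain F1 F2 where F1: "a = p F1" "F1 \<in> A" "F1 \<subseteq> E1" "\<forall>mu\<in>S. tv A mu F1 < \<delta>1"
    and F2: "b = p F2" "F2 \<in> A" "F2 \<subseteq> E2" "\<forall>mu\<in>S. tv A mu F2 < \<delta>2"
    unfolding small_masses_def by blast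
  have "F1 \<inter> F2 = {}" using F1(3) F2(3) E(3) by blast
  then have "a + b = p (F1 \<union> F2)" using fin_additiveD[OF fa_p F1(2) F2(2)] F1(1) F2(1) by simp
  also have "\<dots> \<le> small_mass S (\<delta>1 + \<delta>2) (E1 \<union> E2)"
  proof (rule small_mass_ge)
    show "F1 \<union> F2 \<in> A" using F1(2) F2(2) by blast
    show "F1 \<union> F2 \<subseteq> E1 \<union> E2" using F1(3) F2(3) by blast
    fix mu assume mu: "mu \<in> S"
    have "tv A mu (F1 \<union> F2) \<le> tv A mu F1 + tv A mu F2"
      using mu S(1) by (intro tv_subadditive[OF Ms_ba F1(2) F2(2)]) auto
    then show "tv A mu (F1 \<union> F2) < \<delta>1 + \<delta>2" using F1(4) F2(4) mu by fastforce
  qed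
  finally show "a + b \<le> small_mass S (\<delta>1 + \<delta>2) (E1 \<union> E2)" .
qed

lemma small_mass_values_ne: "small_mass_values E \<noteq> {}"
proof -
  have "small_mass {} 1 E \<in> small_mass_values E" unfolding small_mass_values_def by force
  then show ?thesis by blast
qed

lemma small_mass_values_bdd: "bdd_below (small_mass_values E)"
  by (rule bdd_belowI[of _ 0]) (auto simp: small_mass_values_def intro: small_mass_nonneg)

lemma singular_part_le: "finite S \<Longrightarrow> S \<subseteq> Ms \<Longrightarrow> \<delta> > 0 \<Longrightarrow> singular_part E \<le> small_mass S \<delta> E"
  unfolding singular_part_def
  by (rule cInf_lower[OF _ small_mass_values_bdd]) (auto simp: small_mass_values_def)

lemma singular_part_ge:
  "(\<And>S \<delta>. finite S \<Longrightarrow> S \<subseteq> Ms \<Longrightarrow> \<delta> > 0 \<Longrightarrow> c \<le> small_mass S \<delta> E) \<Longrightarrow> c \<le> singular_part E"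
  unfolding singular_part_def
  by (rule cInf_greatest[OF small_mass_values_ne]) (auto simp: small_mass_values_def)

lemma singular_part_nonneg: "0 \<le> singular_part E"
  by (rule singular_part_ge) (rule small_mass_nonneg)

lemma singular_part_le_p: "E \<in> A \<Longrightarrow> singular_part E \<le> p E"
  using singular_part_le[of "{}" 1 E] small_mass_le_p[of "{}" 1 E] by simp

lemma singular_part_fin_additive: "fin_additive A singular_part"
  unfolding fin_additive_def
proof (intro ballI impI)
  fix E1 E2 assume E: "E1 \<in> A" "E2 \<in> A" "E1 \<inter> E2 = {}"
  show "singular_part (E1 \<union> E2) = singular_part E1 + singular_part E2"
  proof (rule order_antisym)
    show "singular_part (E1 \<union> E2) \<le> singular_part E1 + singular_part E2"
      unfolding singular_part_def[of E1] singular_part_def[of E2]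
    proof (rule cInf_add_ge[OF small_mass_values_ne small_mass_values_ne])
      fix a b assume "a \<in> small_mass_values E1" "b \<in> small_mass_values E2"
      then obtain S1 \<delta>1 S2 \<delta>2 where
        a: "a = small_mass S1 \<delta>1 E1" "finite S1" "S1 \<subseteq> Ms" "\<delta>1 > 0" and
        b: "b = small_mass S2 \<delta>2 E2" "finite S2" "S2 \<subseteq> Ms" "\<delta>2 > 0"
        unfolding small_mass_values_def by blast
      let ?S = "S1 \<union> S2" and ?\<delta> = "min \<delta>1 \<delta>2"
      have S: "finite ?S" "?S \<subseteq> Ms" "?\<delta> > 0" using a b by auto
      have "singular_part (E1 \<union> E2) \<le> small_mass ?S ?\<delta> (E1 \<union> E2)" by (rule singular_part_le[OF S])
      also have "\<dots> \<le> small_mass ?S ?\<delta> E1 + small_mass ?S ?\<delta> E2"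
        by (rule small_mass_subadditive[OF S(2,3) E])
      also have "\<dots> \<le> a + b" unfolding a(1) b(1)
        by (intro add_mono small_mass_anti) (use S a b in auto)
      finally show "singular_part (E1 \<union> E2) \<le> a + b" .
    qed
    show "singular_part E1 + singular_part E2 \<le> singular_part (E1 \<union> E2)"
    proof (rule singular_part_ge)
      fix S \<delta> assume S: "finite S" "S \<subseteq> Ms" "(\<delta>::real) > 0"
      have "singular_part E1 + singular_part E2 \<le> small_mass S (\<delta>/2) E1 + small_mass S (\<delta>/2) E2"
        using S by (intro add_mono singular_part_le) auto
      also have "\<dots> \<le> small_mass S (\<delta>/2 + \<delta>/2) (E1 \<union> E2)" using S by (intro small_mass_join E) auto
      finally show "singular_part E1 + singular_part E2 \<le> small_mass S \<delta> (E1 \<union> E2)" by simp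
    qed
  qed
qed

lemma singular_part_ba: "ba A singular_part"
proof -
  have "\<bar>singular_part E\<bar> \<le> p \<Omega>" if "E \<in> A" for E
    using singular_part_nonneg[of E] singular_part_le_p[OF that] p_le_top[OF that] by simp
  then show ?thesis unfolding ba_def bdd_setfun_def using singular_part_fin_additive by blast
qed

lemma singular_part_positive: "positive_setfun A singular_part"
  unfolding positive_setfun_def using singular_part_nonneg by blast

text \<open>The singular part is singular to each \<open>mu \<in> Ms\<close>: choose \<open>\<delta>\<close> with
  \<open>small_mass {mu} \<delta> \<Omega>\<close> almost minimal and a \<open>\<delta>\<close>-small set \<open>F\<close> of almost maximal \<open>p\<close>-mass;
  then the singular part of \<open>\<Omega> - F\<close> is small.\<close>
lemma singular_part_singular:
  assumes mu: "mu \<in> Ms"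
  shows "singular \<Omega> A singular_part mu"
  unfolding singular_def
proof (intro allI impI)
  fix \<epsilon> :: real assume "\<epsilon> > 0"
  then have e: "\<epsilon> / 3 > 0" by simp
  have Smu: "{mu} \<subseteq> Ms" using mu by simp
  define G where "G = (\<lambda>\<delta>. small_mass {mu} \<delta> \<Omega>) ` {0<..}"
  have Gne: "G \<noteq> {}" unfolding G_def by auto
  have Gbdd: "bdd_below G"
    unfolding G_def by (rule bdd_belowI[of _ 0]) (use small_mass_nonneg Smu in auto)
  have "Inf G < Inf G + \<epsilon> / 3" using e by simp
  then obtain x where "x \<in> G" "x < Inf G + \<epsilon> / 3" using cInf_less_iff[OF Gne Gbdd] by blast
  then obtain \<delta>0 where d0: "\<delta>0 > 0" "small_mass {mu} \<delta>0 \<Omega> < Inf G + \<epsilon> / 3"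
    unfolding G_def by auto
  define \<delta> where "\<delta> = min (\<delta>0 / 2) (\<epsilon> / 3)"
  have d: "\<delta> > 0" "\<delta> \<le> \<epsilon> / 3" "\<delta> + \<delta> \<le> \<delta>0" using d0 e unfolding \<delta>_def by auto
  have "small_mass {mu} (\<delta> + \<delta>) \<Omega> \<le> small_mass {mu} \<delta>0 \<Omega>" using d Smu by (intro small_mass_anti) auto
  then have g2: "small_mass {mu} (\<delta> + \<delta>) \<Omega> < Inf G + \<epsilon> / 3" using d0 by simp
  have g1: "Inf G \<le> small_mass {mu} \<delta> \<Omega>"
    unfolding G_def by (rule cInf_lower) (use d Gbdd G_def in auto)
  have "small_mass {mu} \<delta> \<Omega> - \<epsilon> / 3 < Sup (small_masses {mu} \<delta> \<Omega>)"
    using e unfolding small_mass_def by simp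
  then obtain x where "x \<in> small_masses {mu} \<delta> \<Omega>" "small_mass {mu} \<delta> \<Omega> - \<epsilon> / 3 < x"
    using less_cSup_iff[OF _ small_masses_bdd] empty_small_mass[OF Smu d(1)] by blast
  then obtain F where F: "F \<in> A" "tv A mu F < \<delta>" "small_mass {mu} \<delta> \<Omega> - \<epsilon> / 3 < p F"
    unfolding small_masses_def by auto
  define E where "E = \<Omega> - F"
  have EA: "E \<in> A" unfolding E_def using F(1) by blast
  have EF: "E \<inter> F = {}" "E \<union> F = \<Omega>" "\<Omega> - E = F"
    using sets_into_space[OF F(1)] unfolding E_def by auto
  have "singular_part E \<le> small_mass {mu} \<delta> E" using Smu d by (intro singular_part_le) auto
  moreover have "small_mass {mu} \<delta> E + small_mass {mu} \<delta> F \<le> small_mass {mu} (\<delta> + \<delta>) \<Omega>"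
    using small_mass_join[OF Smu d(1) d(1) EA F(1) EF(1)] EF(2) by simp
  moreover have "p F \<le> small_mass {mu} \<delta> F" using F by (intro small_mass_ge) auto
  ultimately have "singular_part E < 2 * \<epsilon> / 3" using g1 g2 F(3) by linarith
  then have "tv A singular_part E + tv A mu (\<Omega> - E) < \<epsilon>"
    using tv_positive[OF singular_part_ba singular_part_positive EA] EF(3) F(2) d(2) by simp
  then show "\<exists>E\<in>A. tv A singular_part E + tv A mu (\<Omega> - E) < \<epsilon>" using EA by blast
qed

lemma remainder_le_gap:
  assumes S: "finite S" "S \<subseteq> Ms" "\<delta> > 0" and E: "E \<in> A" "\<forall>mu\<in>S. tv A mu E < \<delta> / 2"
  shows "p E - singular_part E \<le> small_mass S \<delta> \<Omega> - singular_part \<Omega>"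
proof -
  have CE: "\<Omega> - E \<in> A" using E(1) by blast
  have EU: "(\<Omega> - E) \<union> E = \<Omega>" "(\<Omega> - E) \<inter> E = {}" using sets_into_space[OF E(1)] by auto
  have "singular_part \<Omega> = singular_part (\<Omega> - E) + singular_part E"
    using fin_additiveD[OF singular_part_fin_additive CE E(1) EU(2)] EU(1) by simp
  moreover have "singular_part (\<Omega> - E) \<le> small_mass S (\<delta> / 2) (\<Omega> - E)"
    using S by (intro singular_part_le) auto
  moreover have "p E \<le> small_mass S (\<delta> / 2) E" using E by (intro small_mass_ge) auto
  moreover have "small_mass S (\<delta> / 2) (\<Omega> - E) + small_mass S (\<delta> / 2) E \<le> small_mass S \<delta> \<Omega>"
    using small_mass_join[OF S(2) _ _ CE E(1) EU(2), of "\<delta> / 2" "\<delta> / 2"] S(3) EU(1) by simp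
  ultimately show ?thesis by linarith
qed

lemma tv_remainder: "E \<in> A \<Longrightarrow> tv A (\<lambda>E. p E - singular_part E) E = p E - singular_part E"
  using ba_diff[OF ba_p singular_part_ba] singular_part_le_p
  by (intro tv_positive) (auto simp: positive_setfun_def)

text \<open>The remainder \<open>p - singular_part\<close> is controlled by countably many members of \<open>Ms\<close>:
  take the sets \<open>S\<close> of a minimizing sequence for \<open>singular_part \<Omega>\<close>.\<close>
lemma remainder_controlled:
  "\<exists>T. countable T \<and> T \<subseteq> Ms \<and> controlled T (\<lambda>E. p E - singular_part E)"
proof -
  have "\<exists>S \<delta>. finite S \<and> S \<subseteq> Ms \<and> \<delta> > 0 \<and> small_mass S \<delta> \<Omega> < singular_part \<Omega> + 1 / Suc k"
    for k :: nat
  proof -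
    have "singular_part \<Omega> < singular_part \<Omega> + 1 / Suc k" by simp
    then obtain x where "x \<in> small_mass_values \<Omega>" "x < singular_part \<Omega> + 1 / Suc k"
      using cInf_less_iff[OF small_mass_values_ne small_mass_values_bdd]
      unfolding singular_part_def by blast
    then show ?thesis unfolding small_mass_values_def by blast
  qed
  then obtain S \<delta> where S: "\<And>k. finite (S k)" "\<And>k. S k \<subseteq> Ms" "\<And>k. \<delta> k > 0"
    "\<And>k. small_mass (S k) (\<delta> k) \<Omega> < singular_part \<Omega> + 1 / Suc k"
    by metis
  define T where "T = (\<Union>k. S k)"
  have T: "countable T" "T \<subseteq> Ms"
    unfolding T_def using S(1,2) by (auto intro: countable_finite)
  have "controlled T (\<lambda>E. p E - singular_part E)"
    unfolding controlled_def
  proof (intro allI impI)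
    fix \<epsilon> :: real assume "\<epsilon> > 0"
    then obtain k :: nat where k: "1 / Suc k < \<epsilon>" by (metis Suc_eq_plus1 nat_approx_posE)
    have "tv A (\<lambda>E. p E - singular_part E) E < \<epsilon>"
      if "E \<in> A" "\<forall>mu\<in>S k. tv A mu E < \<delta> k / 2" for E
      using remainder_le_gap[OF S(1-3) that] S(4)[of k] k tv_remainder[OF that(1)] by linarith
    moreover have "S k \<subseteq> T" unfolding T_def by blast
    ultimately show "\<exists>S \<delta>. finite S \<and> S \<subseteq> T \<and> \<delta> > 0 \<and>
        (\<forall>E\<in>A. (\<forall>mu\<in>S. tv A mu E < \<delta>) \<longrightarrow> tv A (\<lambda>E. p E - singular_part E) E < \<epsilon>)"
      using S(1,3)[of k] by (intro exI[of _ "S k"] exI[of _ "\<delta> k / 2"]) auto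
  qed
  then show ?thesis using T by blast
qed

end

context set_algebra
begin

lemma positive_decomposition_exists:
  assumes Mba: "Ms \<subseteq> {mu. ba A mu}" and p: "ba A p" "positive_setfun A p"
  obtains s T where "ba A s" "positive_setfun A s" "\<And>E. E \<in> A \<Longrightarrow> s E \<le> p E"
    "\<forall>mu\<in>Ms. singular \<Omega> A s mu" "countable T" "T \<subseteq> Ms" "controlled T (\<lambda>E. p E - s E)"
proof -
  interpret positive_decomposition \<Omega> A Ms p using Mba p by unfold_locales auto
  obtain T where "countable T" "T \<subseteq> Ms" "controlled T (\<lambda>E. p E - singular_part E)"
    using remainder_controlled by blast
  then show ?thesis
    using that singular_part_ba singular_part_positive singular_part_le_p singular_part_singular
    by blast
qed

text \<open>Existence: decompose the positive and negative Jordan parts separately and subtract.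
  Positivity and countable additivity of \<open>lam\<close> pass to the two components.\<close>
lemma decomposition_exists:
  assumes Mba: "Ms \<subseteq> {mu. ba A mu}" and Mne: "Ms \<noteq> {}" and ba: "ba A lam"
  shows "\<exists>lc lp. is_decomp \<Omega> A Ms lam lc lp \<and>
    (positive_setfun A lam \<longrightarrow> positive_setfun A lc \<and> positive_setfun A lp) \<and>
    (countably_additive_setfun A lam \<longrightarrow>
       countably_additive_setfun A lc \<and> countably_additive_setfun A lp)"
proof -
  obtain P N where PN: "ba A P" "ba A N" "positive_setfun A P" "positive_setfun A N"
    and lam_eq: "\<And>E. E \<in> A \<Longrightarrow> lam E = P E - N E"
    and N_zero: "positive_setfun A lam \<Longrightarrow> \<forall>E\<in>A. N E = 0"
    and PN_ca: "countably_additive_setfun A lam \<Longrightarrow>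
      countably_additive_setfun A P \<and> countably_additive_setfun A N"
    using jordan_decomposition[OF ba] by blast
  obtain s1 T1 where s1: "ba A s1" "positive_setfun A s1" "\<And>E. E \<in> A \<Longrightarrow> s1 E \<le> P E"
    "\<forall>mu\<in>Ms. singular \<Omega> A s1 mu" "countable T1" "T1 \<subseteq> Ms" "controlled T1 (\<lambda>E. P E - s1 E)"
    using positive_decomposition_exists[OF Mba PN(1,3)] by blast
  obtain s2 T2 where s2: "ba A s2" "positive_setfun A s2" "\<And>E. E \<in> A \<Longrightarrow> s2 E \<le> N E"
    "\<forall>mu\<in>Ms. singular \<Omega> A s2 mu" "countable T2" "T2 \<subseteq> Ms" "controlled T2 (\<lambda>E. N E - s2 E)"
    using positive_decomposition_exists[OF Mba PN(2,4)] by blast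
  define c1 where "c1 = (\<lambda>E. P E - s1 E)"
  define c2 where "c2 = (\<lambda>E. N E - s2 E)"
  define lc where "lc = (\<lambda>E. c1 E - c2 E)"
  define lp where "lp = (\<lambda>E. s1 E - s2 E)"
  have c: "ba A c1" "ba A c2" unfolding c1_def c2_def using ba_diff PN(1,2) s1(1) s2(1) by auto
  have "controlled (T1 \<union> T2) lc" unfolding lc_def
    using s1(7) s2(7)
    by (intro controlled_diff c controlled_mono[of _ "T1 \<union> T2"]) (auto simp: c1_def c2_def)
  then obtain m where "m \<in> convA \<Omega> A Ms" "abs_cont A m lc"
    using controlled_abs_cont[OF Mba Mne] s1(5,6) s2(5,6) by blast
  moreover have "\<forall>mu\<in>Ms. singular \<Omega> A lp mu"
    unfolding lp_def using singular_diff[OF s1(1) s2(1)] s1(4) s2(4) Mba by auto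
  moreover have "ba A lc" "ba A lp" unfolding lc_def lp_def using ba_diff c s1(1) s2(1) by auto
  moreover have "\<forall>E\<in>A. lam E = lc E + lp E" using lam_eq unfolding lc_def lp_def c1_def c2_def by simp
  ultimately have decomp: "is_decomp \<Omega> A Ms lam lc lp" unfolding is_decomp_def by blast
  have positive: "positive_setfun A lc \<and> positive_setfun A lp" if "positive_setfun A lam"
  proof -
    have "s2 E = 0" "N E = 0" if "E \<in> A" for E
      using N_zero[OF \<open>positive_setfun A lam\<close>] s2(2,3) that unfolding positive_setfun_def by force+
    then show ?thesis using s1(2,3) unfolding positive_setfun_def lc_def lp_def c1_def c2_def by simp
  qed
  have ca: "countably_additive_setfun A lc \<and> countably_additive_setfun A lp"
    if "countably_additive_setfun A lam"
    using ca_dominated_split[OF PN(1) _ s1(1-3)] ca_dominated_split[OF PN(2) _ s2(1-3)] PN_ca[OF that]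
    unfolding lc_def lp_def c1_def c2_def by (auto intro: ca_diff)
  show ?thesis using decomp positive ca by blast
qed

text \<open>Uniqueness: if \<open>lc + lp = lc' + lp'\<close> with \<open>lc \<ll> m\<close>, \<open>lc' \<ll> m'\<close> and \<open>lp\<close>, \<open>lp'\<close> singular to
  \<open>Ms\<close>, then \<open>lc - lc' = lp' - lp\<close> is both absolutely continuous and singular with respect to
  \<open>m + m'\<close>, hence zero.\<close>
lemma decomposition_unique:
  assumes Mba: "Ms \<subseteq> {mu. ba A mu}"
    and D: "is_decomp \<Omega> A Ms lam lc lp" and D': "is_decomp \<Omega> A Ms lam lc' lp'" and E: "E \<in> A"
  shows "lc' E = lc E \<and> lp' E = lp E"
proof -
  obtain m where lc: "ba A lc" "ba A lp" "\<forall>E\<in>A. lam E = lc E + lp E"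
      "\<forall>mu\<in>Ms. singular \<Omega> A lp mu" "m \<in> convA \<Omega> A Ms" "abs_cont A m lc"
    using D unfolding is_decomp_def by auto
  obtain m' where lc': "ba A lc'" "ba A lp'" "\<forall>E\<in>A. lam E = lc' E + lp' E"
      "\<forall>mu\<in>Ms. singular \<Omega> A lp' mu" "m' \<in> convA \<Omega> A Ms" "abs_cont A m' lc'"
    using D' unfolding is_decomp_def by auto
  note m = convA_properties[OF Mba lc(5)] and m' = convA_properties[OF Mba lc'(5)]
  define n where "n = (\<lambda>E. m E + m' E)"
  have n: "ba A n" "positive_setfun A n"
    unfolding n_def using ba_add[OF m(1) m'(1)] m(2) m'(2) by (simp_all add: positive_setfun_def)
  have le_n: "tv A m F \<le> tv A n F" "tv A m' F \<le> tv A n F" if "F \<in> A" for F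
  proof -
    have "tv A n F = m F + m' F" using tv_positive[OF n that] unfolding n_def .
    moreover have "tv A m F = m F" "tv A m' F = m' F"
      using tv_positive[OF m(1,2) that] tv_positive[OF m'(1,2) that] by auto
    moreover have "0 \<le> m F" "0 \<le> m' F" using m(2) m'(2) that unfolding positive_setfun_def by auto
    ultimately show "tv A m F \<le> tv A n F" "tv A m' F \<le> tv A n F" by linarith+
  qed
  have ac: "abs_cont A n (\<lambda>E. lc E - lc' E)"
    by (rule abs_cont_diff[OF lc(1) lc'(1) abs_cont_mono[OF le_n(1) lc(6)] abs_cont_mono[OF le_n(2) lc'(6)]])
  have "singular \<Omega> A lp n" unfolding n_def
    using singular_add_right[OF lc(2) m(1) m'(1) m(3)[OF lc(2,4)] m'(3)[OF lc(2,4)]] .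
  moreover have "singular \<Omega> A lp' n" unfolding n_def
    using singular_add_right[OF lc'(2) m(1) m'(1) m(3)[OF lc'(2,4)] m'(3)[OF lc'(2,4)]] .
  ultimately have "singular \<Omega> A (\<lambda>E. lp' E - lp E) n"
    using singular_diff[OF lc'(2) lc(2) n(1)] by blast
  moreover have "lp' F - lp F = lc F - lc' F" if "F \<in> A" for F
  proof -
    have "lc F + lp F = lc' F + lp' F" using lc(3) lc'(3) that by auto
    then show ?thesis by linarith
  qed
  ultimately have "singular \<Omega> A (\<lambda>E. lc E - lc' E) n"
    using singular_cong[of "\<lambda>E. lp' E - lp E" "\<lambda>E. lc E - lc' E" n] by simp
  then have "lc E - lc' E = 0"
    using abs_cont_singular_zero[OF ba_diff[OF lc(1) lc'(1)] n(1) ac] E by blast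
  moreover have "lc E + lp E = lc' E + lp' E" using lc(3) lc'(3) E by auto
  ultimately show ?thesis by linarith
qed

end

theorem mainTheorem1:
  fixes \<Omega> :: "'a set" and A :: "'a set set"
    and M :: "('a set \<Rightarrow> real) set" and lam :: "'a set \<Rightarrow> real"
  assumes "algebra \<Omega> A"
    and "ba A lam"
    and "M \<subseteq> {mu. ba A mu}"
    and "M \<noteq> {}"
  shows "\<exists>lc lp. is_decomp \<Omega> A M lam lc lp \<and>
           (\<forall>lc' lp'. is_decomp \<Omega> A M lam lc' lp' \<longrightarrow>
              (\<forall>E\<in>A. lc' E = lc E \<and> lp' E = lp E)) \<and>
           (positive_setfun A lam \<longrightarrow> positive_setfun A lc \<and> positive_setfun A lp) \<and>
           (countably_additive_setfun A lam \<longrightarrow>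
              countably_additive_setfun A lc \<and> countably_additive_setfun A lp)"
proof -
  interpret set_algebra \<Omega> A using assms(1) by (simp add: set_algebra_def)
  obtain lc lp where D: "is_decomp \<Omega> A M lam lc lp"
    and "positive_setfun A lam \<longrightarrow> positive_setfun A lc \<and> positive_setfun A lp"
    and "countably_additive_setfun A lam \<longrightarrow>
      countably_additive_setfun A lc \<and> countably_additive_setfun A lp"
    using decomposition_exists[OF assms(3,4,2)] by blast
  moreover have "\<forall>lc' lp'. is_decomp \<Omega> A M lam lc' lp' \<longrightarrow> (\<forall>E\<in>A. lc' E = lc E \<and> lp' E = lp E)"
    using decomposition_unique[OF assms(3) D] by blast
  ultimately show ?thesis by blast
qed

end
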